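(* Let $(H,\cdot,1,\Delta,\epsilon,S,\rightharpoonup)$ be a Yetter--Drinfeld post-Hopf algebra, with $\bullet_\rightharpoonup$ and $S_\rightharpoonup$ as in (P6). Then $(H,\cdot,\bullet_\rightharpoonup,1,\Delta,\epsilon,S,S_\rightharpoonup)$ is a Yetter--Drinfeld brace. Moreover, any morphism of Yetter--Drinfeld post-Hopf algebras $f:(H,\rightharpoonup)\to(H',\rightharpoonup')$ is a morphism of Yetter--Drinfeld braces between the associated Yetter--Drinfeld braces, so that this assignment defines a functor $F:\mathcal{YD}\mathrm{PH}(\mathrm{Vec}_\Bbbk)\to\mathcal{YD}\mathrm{Br}(\mathrm{Vec}_\Bbbk)$.
   Context: Conventions: $\Bbbk$ is a field; algebras are associative unital, coalgebras coassociative counital; Sweedler notation $\Delta(c)=c_1\otimes c_2$ (summation omitted), iterated as $c_1\otimes c_2\otimes c_3$ etc.; $H\otimes H$ carries the tensor product coalgebra structure. Definition (Yetter--Drinfeld post-Hopf algebra). A tuple $(H,\cdot,1,\Delta,\epsilon,S,\rightharpoonup)$ where $(H,\cdot,1)$ is an algebra, $(H,\Delta,\epsilon)$ is a coalgebra on the same vector space, $S:H\to H$ is linear with $x_1\cdot S(x_2)=S(x_1)\cdot x_2=\epsilon(x)1$ for all $x$, and $\rightharpoonup:H\otimes H\to H$ is a coalgebra morphism, such that for all $x,y,z\in H$: (P1) $x\rightharpoonup(y\cdot z)=(x_1\rightharpoonup y)\cdot(x_2\rightharpoonup z)$; (P2) $x\rightharpoonup(y\rightharpoonup z)=\big(x_1\cdot(x_2\rightharpoonup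 y)\big)\rightharpoonup z$; (P3) the map $\alpha_\rightharpoonup:H\to\mathrm{End}(H)$, $\alpha_\rightharpoonup(x)(y)=x\rightharpoonup y$, is convolution invertible, i.e. there is $\beta_\rightharpoonup:H\to\mathrm{End}(H)$ with $\alpha_\rightharpoonup(x_1)\circ\beta_\rightharpoonup(x_2)=\beta_\rightharpoonup(x_1)\circ\alpha_\rightharpoonup(x_2)=\epsilon(x)\mathrm{Id}_H$; (P4) $\epsilon(a\cdot b)=\epsilon(a)\epsilon(b)$, $\epsilon(1)=1_\Bbbk$, $\Delta(1)=1\otimes 1$; (P5) $\Delta(x\cdot y)=\Big(x_1\cdot\alpha_\rightharpoonup(x_2)\big(\beta_\rightharpoonup(x_4)(y_1)\big)\Big)\otimes(x_3\cdot y_2)$; (P6) setting $x\bullet_\rightharpoonup y:=x_1\cdot(x_2\rightharpoonup y)$, $S_\rightharpoonup(x):=\beta_\rightharpoonup(x_1)(S(x_2))$ and $x\leftharpoonup y:=\big(S_\rightharpoonup(x_1\rightharpoonup y_1)\bullet_\rightharpoonup x_2\big)\bullet_\rightharpoonup y_2$, one has $\Delta(S_\rightharpoonup(x))=S_\rightharpoonup(x_2)\otimes S_\rightharpoonup(x_1)$ and $(x_1\rightharpoonup y_1)\otimes(x_2\leftharpoonup y_2)=(x_2\rightharpoonup y_2)\otimes(x_1\leftharpoonup y_1)$. A morphism of Yetter--Drinfeld post-Hopf algebras $(H,\rightharpoonup)\to(H',\rightharpoonup')$ is an algebra and coalgebra morphism $g$ with $g(x\rightharpoonup y)=g(x)\rightharpoonup'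 g(y)$; these form the category $\mathcal{YD}\mathrm{PH}(\mathrm{Vec}_\Bbbk)$. Yetter--Drinfeld modules: for a Hopf algebra $A$ with antipode $T$, a left-left Yetter--Drinfeld module is a left $A$-module $(V,\triangleright)$ and left $A$-comodule $\rho(v)=v_{-1}\otimes v_0$ with $\rho(a\triangleright v)=a_1v_{-1}T(a_3)\otimes a_2\triangleright v_0$; these form the braided monoidal category ${}^A_A\mathcal{YD}$ with braiding $\sigma(v\otimes w)=v_{-1}\triangleright w\otimes v_0$. A Hopf monoid in ${}^A_A\mathcal{YD}$ is an object with algebra and coalgebra structure maps in ${}^A_A\mathcal{YD}$, $\epsilon$ multiplicative, $\epsilon(1)=1$, $\Delta(1)=1\otimes1$, $\Delta\circ m=(m\otimes m)(\mathrm{Id}\otimes\sigma\otimes\mathrm{Id})(\Delta\otimes\Delta)$, and an antipode (convolution inverse of the identity). Definition (Yetter--Drinfeld brace). A tuple $(H,\cdot,\bullet,1,\Delta,\epsilon,S,T)$ such that $H^\bullet=(H,\bullet,1,\Delta,\epsilon,T)$ is a Hopf algebra and: (1) $(H,\cdot,1,\Delta,\epsilon,S)$ is a Hopf monoid in ${}^{H^\bullet}_{H^\bullet}\mathcal{YD}$ with action $a\rightharpoonup b:=S(a_1)\cdot(a_2\bullet b)$ and coaction $\mathrm{Ad}_L(a)=a_1\bullet T(a_3)\otimes a_2$; (2) with $a\leftharpoonup b:=T(a_1\rightharpoonup b_1)\bullet a_2\bullet b_2$ one has $(a_1\rightharpoonup b_1)\otimes(a_2\leftharpoonup b_2)=(a_2\rightharpoonup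 b_2)\otimes(a_1\leftharpoonup b_1)$; (3) $a\bullet(b\cdot c)=(a_1\bullet b)\cdot S(a_2)\cdot(a_3\bullet c)$. A morphism of Yetter--Drinfeld braces is a Hopf algebra morphism $f:H^\bullet\to K^\bullet$ with $f(a\cdot_H b)=f(a)\cdot_K f(b)$; these form the category $\mathcal{YD}\mathrm{Br}(\mathrm{Vec}_\Bbbk)$. *)

theory Defs
  imports Complex_Main
begin

text \<open>
A linear map Delta : H -> H (x) H is represented by a function cm :: 'h => ('h * 'h) list,
cm x being a finite list of simple tensors whose sum is Delta(x) (scalars absorbed into the
first tensor factor).  An element of a tensor power of H is identified through the values
of all multilinear forms on it (over a field the dual space separates points).
\<close>

definition sw :: "('h \<Rightarrow> ('h \<times> 'h) list) \<Rightarrow> ('h \<Rightarrow> 'h \<Rightarrow> 'v::comm_monoid_add) \<Rightarrow> 'h \<Rightarrow> 'v" where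
  "sw cm f x = sum_list (map (\<lambda>(a, b). f a b) (cm x))"

definition sw3 :: "('h \<Rightarrow> ('h \<times> 'h) list) \<Rightarrow> ('h \<Rightarrow> 'h \<Rightarrow> 'h \<Rightarrow> 'v::comm_monoid_add) \<Rightarrow> 'h \<Rightarrow> 'v" where
  "sw3 cm g x = sw cm (\<lambda>a b. sw cm (\<lambda>c d. g c d b) a) x"

definition sw4 :: "('h \<Rightarrow> ('h \<times> 'h) list) \<Rightarrow> ('h \<Rightarrow> 'h \<Rightarrow> 'h \<Rightarrow> 'h \<Rightarrow> 'v::comm_monoid_add) \<Rightarrow> 'h \<Rightarrow> 'v" where
  "sw4 cm g x = sw cm (\<lambda>a b. sw3 cm (\<lambda>c d e. g c d e b) a) x"

definition bilin :: "('k::field \<Rightarrow> 'h::ab_group_add \<Rightarrow> 'h) \<Rightarrow> ('k \<Rightarrow> 'c::ab_group_add \<Rightarrow> 'c)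
    \<Rightarrow> ('h \<Rightarrow> 'h \<Rightarrow> 'c) \<Rightarrow> bool" where
  "bilin sc sc2 f \<longleftrightarrow> (\<forall>x. Vector_Spaces.linear sc sc2 (f x)) \<and> (\<forall>y. Vector_Spaces.linear sc sc2 (\<lambda>x. f x y))"

definition trilin :: "('k::field \<Rightarrow> 'h::ab_group_add \<Rightarrow> 'h) \<Rightarrow> ('k \<Rightarrow> 'c::ab_group_add \<Rightarrow> 'c)
    \<Rightarrow> ('h \<Rightarrow> 'h \<Rightarrow> 'h \<Rightarrow> 'c) \<Rightarrow> bool" where
  "trilin sc sc2 f \<longleftrightarrow> (\<forall>x y. Vector_Spaces.linear sc sc2 (f x y)) \<and> (\<forall>x z. Vector_Spaces.linear sc sc2 (\<lambda>y. f x y z))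
     \<and> (\<forall>y z. Vector_Spaces.linear sc sc2 (\<lambda>x. f x y z))"

definition coalg :: "('k::field \<Rightarrow> 'h::ab_group_add \<Rightarrow> 'h) \<Rightarrow> ('h \<Rightarrow> ('h \<times> 'h) list) \<Rightarrow> ('h \<Rightarrow> 'k) \<Rightarrow> bool" where
  "coalg sc cm eps \<longleftrightarrow> Vector_Spaces.vector_space sc \<and> Vector_Spaces.linear sc (*) eps
   \<and> (\<forall>f. bilin sc (*) f \<longrightarrow> (\<forall>x y. sw cm f (x + y) = sw cm f x + sw cm f y)
                            \<and> (\<forall>c x. sw cm f (sc c x) = c * sw cm f x))
   \<and> (\<forall>f. trilin sc (*) f \<longrightarrow> (\<forall>x. sw cm (\<lambda>a b. sw cm (\<lambda>c d. f c d b) a) x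
                                   = sw cm (\<lambda>a b. sw cm (\<lambda>c d. f a c d) b) x))
   \<and> (\<forall>x. sw cm (\<lambda>a b. sc (eps a) b) x = x)
   \<and> (\<forall>x. sw cm (\<lambda>a b. sc (eps b) a) x = x)"

definition alg :: "('k::field \<Rightarrow> 'h::ab_group_add \<Rightarrow> 'h) \<Rightarrow> ('h \<Rightarrow> 'h \<Rightarrow> 'h) \<Rightarrow> 'h \<Rightarrow> bool" where
  "alg sc mul one \<longleftrightarrow> Vector_Spaces.vector_space sc \<and> bilin sc sc mul
   \<and> (\<forall>x y z. mul (mul x y) z = mul x (mul y z)) \<and> (\<forall>x. mul one x = x \<and> mul x one = x)"

definition pbul :: "('h \<Rightarrow> 'h \<Rightarrow> 'h::ab_group_add) \<Rightarrow> ('h \<Rightarrow> ('h \<times> 'h) list) \<Rightarrow> ('h \<Rightarrow> 'h \<Rightarrow> 'h) \<Rightarrow> 'h \<Rightarrow> 'h \<Rightarrow> 'h" where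
  "pbul mul cm act x y = sw cm (\<lambda>x1 x2. mul x1 (act x2 y)) x"

definition pS :: "('h \<Rightarrow> ('h \<times> 'h) list) \<Rightarrow> ('h \<Rightarrow> 'h) \<Rightarrow> ('h \<Rightarrow> 'h \<Rightarrow> 'h::ab_group_add) \<Rightarrow> 'h \<Rightarrow> 'h" where
  "pS cm S beta x = sw cm (\<lambda>x1 x2. beta x1 (S x2)) x"

definition plh :: "('h \<Rightarrow> 'h \<Rightarrow> 'h::ab_group_add) \<Rightarrow> ('h \<Rightarrow> ('h \<times> 'h) list) \<Rightarrow> ('h \<Rightarrow> 'h)
    \<Rightarrow> ('h \<Rightarrow> 'h \<Rightarrow> 'h) \<Rightarrow> ('h \<Rightarrow> 'h \<Rightarrow> 'h) \<Rightarrow> 'h \<Rightarrow> 'h \<Rightarrow> 'h" where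
  "plh mul cm S act beta x y =
     sw cm (\<lambda>x1 x2. sw cm (\<lambda>y1 y2.
        pbul mul cm act (pbul mul cm act (pS cm S beta (act x1 y1)) x2) y2) y) x"

text \<open>The YD post-Hopf algebra axioms, where beta is the (unique) convolution inverse of
  alpha required by (P3).\<close>
definition ydph :: "('k::field \<Rightarrow> 'h::ab_group_add \<Rightarrow> 'h) \<Rightarrow> ('h \<Rightarrow> 'h \<Rightarrow> 'h) \<Rightarrow> 'h
    \<Rightarrow> ('h \<Rightarrow> ('h \<times> 'h) list) \<Rightarrow> ('h \<Rightarrow> 'k) \<Rightarrow> ('h \<Rightarrow> 'h) \<Rightarrow> ('h \<Rightarrow> 'h \<Rightarrow> 'h) \<Rightarrow> ('h \<Rightarrow> 'h \<Rightarrow> 'h) \<Rightarrow> bool" where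
  "ydph sc mul one cm eps S act beta \<longleftrightarrow>
     alg sc mul one \<and> coalg sc cm eps
   \<comment> \<open>S linear with x_1 S(x_2) = S(x_1) x_2 = eps(x) 1\<close>
   \<and> Vector_Spaces.linear sc sc S
   \<and> (\<forall>x. sw cm (\<lambda>a b. mul a (S b)) x = sc (eps x) one \<and> sw cm (\<lambda>a b. mul (S a) b) x = sc (eps x) one)
   \<comment> \<open>act : H (x) H -> H linear and a coalgebra morphism\<close>
   \<and> bilin sc sc act
   \<and> (\<forall>f. bilin sc (*) f \<longrightarrow> (\<forall>x y. sw cm f (act x y)
          = sw cm (\<lambda>x1 x2. sw cm (\<lambda>y1 y2. f (act x1 y1) (act x2 y2)) y) x))
   \<and> (\<forall>x y. eps (act x y) = eps x * eps y)
   \<comment> \<open>(P1)\<close>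
   \<and> (\<forall>x y z. act x (mul y z) = sw cm (\<lambda>x1 x2. mul (act x1 y) (act x2 z)) x)
   \<comment> \<open>(P2)\<close>
   \<and> (\<forall>x y z. act x (act y z) = act (sw cm (\<lambda>x1 x2. mul x1 (act x2 y)) x) z)
   \<comment> \<open>(P3): beta : H -> End(H) linear, convolution inverse of alpha\<close>
   \<and> (\<forall>x. Vector_Spaces.linear sc sc (beta x)) \<and> (\<forall>y. Vector_Spaces.linear sc sc (\<lambda>x. beta x y))
   \<and> (\<forall>x y. sw cm (\<lambda>x1 x2. act x1 (beta x2 y)) x = sc (eps x) y)
   \<and> (\<forall>x y. sw cm (\<lambda>x1 x2. beta x1 (act x2 y)) x = sc (eps x) y)
   \<comment> \<open>(P4)\<close>
   \<and> (\<forall>a b. eps (mul a b) = eps a * eps b) \<and> eps one = 1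
   \<and> (\<forall>f. bilin sc (*) f \<longrightarrow> sw cm f one = f one one)
   \<comment> \<open>(P5)\<close>
   \<and> (\<forall>f. bilin sc (*) f \<longrightarrow> (\<forall>x y. sw cm f (mul x y)
        = sw4 cm (\<lambda>x1 x2 x3 x4. sw cm (\<lambda>y1 y2. f (mul x1 (act x2 (beta x4 y1))) (mul x3 y2)) y) x))
   \<comment> \<open>(P6)\<close>
   \<and> (\<forall>f. bilin sc (*) f \<longrightarrow> (\<forall>x. sw cm f (pS cm S beta x)
        = sw cm (\<lambda>x1 x2. f (pS cm S beta x2) (pS cm S beta x1)) x))
   \<and> (\<forall>f. bilin sc (*) f \<longrightarrow> (\<forall>x y.
        sw cm (\<lambda>x1 x2. sw cm (\<lambda>y1 y2. f (act x1 y1) (plh mul cm S act beta x2 y2)) y) x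
      = sw cm (\<lambda>x1 x2. sw cm (\<lambda>y1 y2. f (act x2 y2) (plh mul cm S act beta x1 y1)) y) x))"

definition ydph_mor :: "('k::field \<Rightarrow> 'h::ab_group_add \<Rightarrow> 'h) \<Rightarrow> ('h \<Rightarrow> 'h \<Rightarrow> 'h) \<Rightarrow> 'h
    \<Rightarrow> ('h \<Rightarrow> ('h \<times> 'h) list) \<Rightarrow> ('h \<Rightarrow> 'k) \<Rightarrow> ('h \<Rightarrow> 'h \<Rightarrow> 'h)
    \<Rightarrow> ('k \<Rightarrow> 'g::ab_group_add \<Rightarrow> 'g) \<Rightarrow> ('g \<Rightarrow> 'g \<Rightarrow> 'g) \<Rightarrow> 'g
    \<Rightarrow> ('g \<Rightarrow> ('g \<times> 'g) list) \<Rightarrow> ('g \<Rightarrow> 'k) \<Rightarrow> ('g \<Rightarrow> 'g \<Rightarrow> 'g) \<Rightarrow> ('h \<Rightarrow> 'g) \<Rightarrow> bool" where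
  "ydph_mor sc mul one cm eps act sc' mul' one' cm' eps' act' g \<longleftrightarrow>
     Vector_Spaces.linear sc sc' g
   \<and> (\<forall>x y. g (mul x y) = mul' (g x) (g y)) \<and> g one = one'
   \<and> (\<forall>f. bilin sc' (*) f \<longrightarrow> (\<forall>x. sw cm' f (g x) = sw cm (\<lambda>a b. f (g a) (g b)) x))
   \<and> (\<forall>x. eps' (g x) = eps x)
   \<and> (\<forall>x y. g (act x y) = act' (g x) (g y))"

definition bact :: "('h \<Rightarrow> 'h \<Rightarrow> 'h::ab_group_add) \<Rightarrow> ('h \<Rightarrow> 'h \<Rightarrow> 'h) \<Rightarrow> ('h \<Rightarrow> ('h \<times> 'h) list)
    \<Rightarrow> ('h \<Rightarrow> 'h) \<Rightarrow> 'h \<Rightarrow> 'h \<Rightarrow> 'h" where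
  "bact mul bul cm S a b = sw cm (\<lambda>a1 a2. mul (S a1) (bul a2 b)) a"

definition bcoact :: "('h \<Rightarrow> 'h \<Rightarrow> 'h::ab_group_add) \<Rightarrow> ('h \<Rightarrow> ('h \<times> 'h) list) \<Rightarrow> ('h \<Rightarrow> 'h)
    \<Rightarrow> ('h \<Rightarrow> 'h \<Rightarrow> 'v::comm_monoid_add) \<Rightarrow> 'h \<Rightarrow> 'v" where
  "bcoact bul cm T f b = sw3 cm (\<lambda>b1 b2 b3. f (bul b1 (T b3)) b2) b"

definition blh :: "('h \<Rightarrow> 'h \<Rightarrow> 'h::ab_group_add) \<Rightarrow> ('h \<Rightarrow> 'h \<Rightarrow> 'h) \<Rightarrow> ('h \<Rightarrow> ('h \<times> 'h) list)
    \<Rightarrow> ('h \<Rightarrow> 'h) \<Rightarrow> ('h \<Rightarrow> 'h) \<Rightarrow> 'h \<Rightarrow> 'h \<Rightarrow> 'h" where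
  "blh mul bul cm S T a b =
     sw cm (\<lambda>a1 a2. sw cm (\<lambda>b1 b2. bul (bul (T (bact mul bul cm S a1 b1)) a2) b2) b) a"

definition yd_brace :: "('k::field \<Rightarrow> 'h::ab_group_add \<Rightarrow> 'h) \<Rightarrow> ('h \<Rightarrow> 'h \<Rightarrow> 'h) \<Rightarrow> ('h \<Rightarrow> 'h \<Rightarrow> 'h) \<Rightarrow> 'h
    \<Rightarrow> ('h \<Rightarrow> ('h \<times> 'h) list) \<Rightarrow> ('h \<Rightarrow> 'k) \<Rightarrow> ('h \<Rightarrow> 'h) \<Rightarrow> ('h \<Rightarrow> 'h) \<Rightarrow> bool" where
  "yd_brace sc mul bul one cm eps S T \<longleftrightarrow>
   (let ra = bact mul bul cm S in
   \<comment> \<open>H^\<bullet> = (H, bul, one, cm, eps, T) is a Hopf algebra\<close>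
     alg sc bul one \<and> coalg sc cm eps
   \<and> (\<forall>a b. eps (bul a b) = eps a * eps b) \<and> eps one = 1
   \<and> (\<forall>f. bilin sc (*) f \<longrightarrow> sw cm f one = f one one)
   \<and> (\<forall>f. bilin sc (*) f \<longrightarrow> (\<forall>a b. sw cm f (bul a b)
          = sw cm (\<lambda>a1 a2. sw cm (\<lambda>b1 b2. f (bul a1 b1) (bul a2 b2)) b) a))
   \<and> Vector_Spaces.linear sc sc T
   \<and> (\<forall>x. sw cm (\<lambda>a b. bul a (T b)) x = sc (eps x) one \<and> sw cm (\<lambda>a b. bul (T a) b) x = sc (eps x) one)
   \<comment> \<open>(1) H with the action ra and coaction Ad_L is a left-left YD module over H^\<bullet>\<close>
   \<and> bilin sc sc ra
   \<and> (\<forall>v. ra one v = v) \<and> (\<forall>a b v. ra (bul a b) v = ra a (ra b v))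
   \<and> (\<forall>f. bilin sc (*) f \<longrightarrow> (\<forall>x y. bcoact bul cm T f (x + y) = bcoact bul cm T f x + bcoact bul cm T f y)
                            \<and> (\<forall>c x. bcoact bul cm T f (sc c x) = c * bcoact bul cm T f x))
   \<and> (\<forall>f. trilin sc (*) f \<longrightarrow> (\<forall>v. bcoact bul cm T (\<lambda>h u. sw cm (\<lambda>h1 h2. f h1 h2 u) h) v
                                   = bcoact bul cm T (\<lambda>h u. bcoact bul cm T (\<lambda>h' u'. f h h' u') u) v))
   \<and> (\<forall>v. bcoact bul cm T (\<lambda>h u. sc (eps h) u) v = v)
   \<and> (\<forall>f. bilin sc (*) f \<longrightarrow> (\<forall>a v. bcoact bul cm T f (ra a v)
          = sw3 cm (\<lambda>a1 a2 a3. bcoact bul cm T (\<lambda>h u. f (bul (bul a1 h) (T a3)) (ra a2 u)) v) a))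
   \<comment> \<open>(1) (H, mul, one, cm, eps, S) is a Hopf monoid in the YD category\<close>
   \<and> alg sc mul one
   \<comment> \<open>mul is a morphism of YD modules\<close>
   \<and> (\<forall>a b c. ra a (mul b c) = sw cm (\<lambda>a1 a2. mul (ra a1 b) (ra a2 c)) a)
   \<and> (\<forall>f. bilin sc (*) f \<longrightarrow> (\<forall>b c. bcoact bul cm T f (mul b c)
          = bcoact bul cm T (\<lambda>h u. bcoact bul cm T (\<lambda>h' u'. f (bul h h') (mul u u')) c) b))
   \<comment> \<open>unit is a morphism of YD modules\<close>
   \<and> (\<forall>a. ra a one = sc (eps a) one)
   \<and> (\<forall>f. bilin sc (*) f \<longrightarrow> bcoact bul cm T f one = f one one)
   \<comment> \<open>comultiplication is a morphism of YD modules\<close>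
   \<and> (\<forall>f. bilin sc (*) f \<longrightarrow> (\<forall>a v. sw cm f (ra a v)
          = sw cm (\<lambda>a1 a2. sw cm (\<lambda>v1 v2. f (ra a1 v1) (ra a2 v2)) v) a))
   \<and> (\<forall>f. trilin sc (*) f \<longrightarrow> (\<forall>v. bcoact bul cm T (\<lambda>h w. sw cm (\<lambda>w1 w2. f h w1 w2) w) v
          = sw cm (\<lambda>v1 v2. bcoact bul cm T (\<lambda>h u. bcoact bul cm T (\<lambda>h' u'. f (bul h h') u u') v2) v1) v))
   \<comment> \<open>counit is a morphism of YD modules (k with trivial action and coaction)\<close>
   \<and> (\<forall>a v. eps (ra a v) = eps a * eps v)
   \<and> (\<forall>v. bcoact bul cm T (\<lambda>h w. sc (eps w) h) v = sc (eps v) one)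
   \<comment> \<open>braided bialgebra axioms\<close>
   \<and> (\<forall>a b. eps (mul a b) = eps a * eps b)
   \<and> (\<forall>f. bilin sc (*) f \<longrightarrow> (\<forall>b c. sw cm f (mul b c)
          = sw cm (\<lambda>b1 b2. sw cm (\<lambda>c1 c2.
               bcoact bul cm T (\<lambda>h u. f (mul b1 (ra h c1)) (mul u c2)) b2) c) b))
   \<comment> \<open>antipode S: convolution inverse of the identity\<close>
   \<and> Vector_Spaces.linear sc sc S
   \<and> (\<forall>x. sw cm (\<lambda>a b. mul a (S b)) x = sc (eps x) one \<and> sw cm (\<lambda>a b. mul (S a) b) x = sc (eps x) one)
   \<comment> \<open>(2)\<close>
   \<and> (\<forall>f. bilin sc (*) f \<longrightarrow> (\<forall>a b.
        sw cm (\<lambda>a1 a2. sw cm (\<lambda>b1 b2. f (ra a1 b1) (blh mul bul cm S T a2 b2)) b) a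
      = sw cm (\<lambda>a1 a2. sw cm (\<lambda>b1 b2. f (ra a2 b2) (blh mul bul cm S T a1 b1)) b) a))
   \<comment> \<open>(3)\<close>
   \<and> (\<forall>a b c. bul a (mul b c) = sw3 cm (\<lambda>a1 a2 a3. mul (mul (bul a1 b) (S a2)) (bul a3 c)) a))"

definition brace_mor :: "('k::field \<Rightarrow> 'h::ab_group_add \<Rightarrow> 'h) \<Rightarrow> ('h \<Rightarrow> 'h \<Rightarrow> 'h) \<Rightarrow> ('h \<Rightarrow> 'h \<Rightarrow> 'h) \<Rightarrow> 'h
    \<Rightarrow> ('h \<Rightarrow> ('h \<times> 'h) list) \<Rightarrow> ('h \<Rightarrow> 'k)
    \<Rightarrow> ('k \<Rightarrow> 'g::ab_group_add \<Rightarrow> 'g) \<Rightarrow> ('g \<Rightarrow> 'g \<Rightarrow> 'g) \<Rightarrow> ('g \<Rightarrow> 'g \<Rightarrow> 'g) \<Rightarrow> 'g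
    \<Rightarrow> ('g \<Rightarrow> ('g \<times> 'g) list) \<Rightarrow> ('g \<Rightarrow> 'k) \<Rightarrow> ('h \<Rightarrow> 'g) \<Rightarrow> bool" where
  "brace_mor sc mul bul one cm eps sc' mul' bul' one' cm' eps' g \<longleftrightarrow>
     Vector_Spaces.linear sc sc' g
   \<comment> \<open>Hopf algebra morphism H^\<bullet> -> K^\<bullet>\<close>
   \<and> (\<forall>x y. g (bul x y) = bul' (g x) (g y)) \<and> g one = one'
   \<and> (\<forall>f. bilin sc' (*) f \<longrightarrow> (\<forall>x. sw cm' f (g x) = sw cm (\<lambda>a b. f (g a) (g b)) x))
   \<and> (\<forall>x. eps' (g x) = eps x)
   \<comment> \<open>preserves the dot product\<close>
   \<and> (\<forall>x y. g (mul x y) = mul' (g x) (g y))"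

end

theory Submission
  imports Defs
begin

text \<open>
All identities live in vector spaces over a field, so it suffices to check them after applying an
arbitrary linear functional. Under a functional a nested Sweedler expression becomes a sum over the
legs of one iterated coproduct, and coassociativity and the counit axioms split or absorb legs.
With this calculus the brace structure follows from the post-Hopf axioms: (P1) and (P2) make
\<open>x \<bullet> y = x\<^sub>1 (x\<^sub>2 \<rightharpoonup> y)\<close> an associative product with unit 1; the convolution inverse of (P3) is
\<open>\<beta>(x) = S\<^sub>\<rightharpoonup>(x) \<rightharpoonup> -\<close>, and with the anti-comultiplicativity of \<open>S\<^sub>\<rightharpoonup>\<close> in (P6) this makes \<open>S\<^sub>\<rightharpoonup>\<close> the
antipode of \<open>\<bullet>\<close>. Then the brace action \<open>S(a\<^sub>1)(a\<^sub>2 \<bullet> b)\<close> is just \<open>a \<rightharpoonup> b\<close>, the product is recovered as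
\<open>x y = x\<^sub>1 \<bullet> (S\<^sub>\<rightharpoonup>(x\<^sub>2) \<rightharpoonup> y)\<close>, the Yetter--Drinfeld compatibility of the adjoint coaction with \<open>\<rightharpoonup>\<close>
comes from \<open>x \<bullet> y = (x\<^sub>1 \<rightharpoonup> y\<^sub>1) \<bullet> (x\<^sub>2 \<leftharpoonup> y\<^sub>2)\<close> and the second half of (P6), and the braided
comultiplicativity of the product is (P5).
\<close>

text \<open>\<open>cm_legs cm n x\<close> lists the simple tensors of \<open>\<Delta>\<^sup>n(x)\<close>, the legs of each one stored as a
  function on \<open>{0..n}\<close> (zero beyond \<open>n\<close>). \<open>leg_split i\<close> replaces leg \<open>i\<close> by two legs,
  \<open>leg_del i\<close> removes it.\<close>

fun cm_legs :: "('h::zero \<Rightarrow> ('h \<times> 'h) list) \<Rightarrow> nat \<Rightarrow> 'h \<Rightarrow> (nat \<Rightarrow> 'h) list" where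
  "cm_legs cm 0 x = [(\<lambda>_. 0)(0 := x)]"
| "cm_legs cm (Suc n) x = concat (map (\<lambda>(a, b). map (\<lambda>l. l(Suc n := b)) (cm_legs cm n a)) (cm x))"

definition sw_iter :: "('h::zero \<Rightarrow> ('h \<times> 'h) list) \<Rightarrow> nat
    \<Rightarrow> ((nat \<Rightarrow> 'h) \<Rightarrow> 'v::comm_monoid_add) \<Rightarrow> 'h \<Rightarrow> 'v" where
  "sw_iter cm n F x = sum_list (map F (cm_legs cm n x))"

definition leg_del :: "nat \<Rightarrow> (nat \<Rightarrow> 'h) \<Rightarrow> nat \<Rightarrow> 'h" where
  "leg_del i m = (\<lambda>j. if j < i then m j else m (Suc j))"

definition leg_split :: "nat \<Rightarrow> 'h \<Rightarrow> 'h \<Rightarrow> (nat \<Rightarrow> 'h) \<Rightarrow> nat \<Rightarrow> 'h" where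
  "leg_split i c d l = (\<lambda>j. if j < i then l j else if j = i then c else if j = Suc i then d else l (j - 1))"

lemma leg_del_apply [simp]: "leg_del i m j = (if j < i then m j else m (Suc j))"
  by (simp add: leg_del_def)

lemma leg_del_split: "leg_del i (leg_split i c d l) = l(i := d)"
  by (auto simp: leg_split_def fun_eq_iff)

lemma sum_list_concat_map: "sum_list (concat (map f xs)) = sum_list (map (\<lambda>x. sum_list (f x)) xs)"
  by (induction xs) auto

lemma sum_list_swap:
  fixes F :: "'a \<Rightarrow> 'b \<Rightarrow> 'v::comm_monoid_add"
  shows "sum_list (map (\<lambda>a. sum_list (map (\<lambda>b. F a b) ys)) xs)
       = sum_list (map (\<lambda>b. sum_list (map (\<lambda>a. F a b) xs)) ys)"
proof (induction xs)
  case (Cons a xs)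
  then show ?case using sum_list_addf[of "\<lambda>b. F a b" _ ys, symmetric] by simp
qed simp

lemma sw_iter_0: "sw_iter cm 0 F x = F ((\<lambda>_. 0)(0 := x))"
  by (simp add: sw_iter_def)

lemma sw_iter_Suc: "sw_iter cm (Suc n) F x = sw cm (\<lambda>a b. sw_iter cm n (\<lambda>l. F (l(Suc n := b))) a) x"
  by (simp add: sw_iter_def sw_def map_concat sum_list_concat_map o_def split_def)

lemma sw_iter_cong_legs:
  "(\<And>l. l \<in> set (cm_legs cm n x) \<Longrightarrow> F l = G l) \<Longrightarrow> sw_iter cm n F x = sw_iter cm n G x"
  unfolding sw_iter_def by (metis map_cong)

lemma sw_iter_cong: "(\<And>l. F l = G l) \<Longrightarrow> sw_iter cm n F x = sw_iter cm n G x"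
  by (rule sw_iter_cong_legs) simp

lemma cm_legs_support: "l \<in> set (cm_legs cm n x) \<Longrightarrow> j > n \<Longrightarrow> l j = 0"
  by (induction n arbitrary: x l) auto

lemma sw_sw_iter_swap:
  "sw cm (\<lambda>c d. sw_iter cm' m (\<lambda>k. F c d k) y) x = sw_iter cm' m (\<lambda>k. sw cm (\<lambda>c d. F c d k) x) y"
  unfolding sw_iter_def sw_def using sum_list_swap[of "\<lambda>p k. F (fst p) (snd p) k" "cm_legs cm' m y" "cm x"]
  by (simp add: split_def)

lemma linear_sum_list:
  assumes "Vector_Spaces.linear s1 s2 \<phi>"
  shows "\<phi> (sum_list (map G xs)) = sum_list (map (\<lambda>a. \<phi> (G a)) xs)"
proof -
  have add: "\<phi> (x + y) = \<phi> x + \<phi> y" for x y using assms by (simp add: Vector_Spaces.linear_iff)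
  have zero: "\<phi> 0 = 0" using add[of 0 0] by simp
  show ?thesis by (induction xs) (simp_all add: add zero)
qed

lemma linear_sum_list_fun:
  assumes "\<And>a. Vector_Spaces.linear s1 s2 (\<lambda>v. G v a)"
    and "Vector_Spaces.vector_space s1" "Vector_Spaces.vector_space s2"
  shows "Vector_Spaces.linear s1 s2 (\<lambda>v. sum_list (map (G v) xs))"
proof (induction xs)
  case Nil
  have "module s2" using assms(3) by (simp add: module_iff_vector_space)
  then have "s2 c 0 = 0" for c by (rule module.scale_zero_right)
  then show ?case using assms(2,3) by (simp add: Vector_Spaces.linear_iff)
next
  case (Cons a xs)
  have "Vector_Spaces.linear s1 s2 (\<lambda>v. G v a)" by (rule assms(1))
  with Cons show ?case using assms(2,3)
    by (auto simp: Vector_Spaces.linear_iff module.scale_right_distrib vector_space_def algebra_simps)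
qed

lemma linear_apply_sw: "Vector_Spaces.linear s1 s2 \<phi> \<Longrightarrow> \<phi> (sw cm G x) = sw cm (\<lambda>a b. \<phi> (G a b)) x"
  unfolding sw_def by (simp add: linear_sum_list split_def)

locale coalgebra =
  fixes sc :: "'k::field \<Rightarrow> 'h::ab_group_add \<Rightarrow> 'h"
    and cm :: "'h \<Rightarrow> ('h \<times> 'h) list" and eps :: "'h \<Rightarrow> 'k"
  assumes coalg: "coalg sc cm eps"
begin

abbreviation lin_k :: "('h \<Rightarrow> 'k) \<Rightarrow> bool" where
  "lin_k \<phi> \<equiv> Vector_Spaces.linear sc ((*) :: 'k \<Rightarrow> 'k \<Rightarrow> 'k) \<phi>"
abbreviation lin_h :: "('h \<Rightarrow> 'h) \<Rightarrow> bool" where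
  "lin_h E \<equiv> Vector_Spaces.linear sc sc E"

lemma vector_space: "Vector_Spaces.vector_space sc"
  using coalg by (simp add: coalg_def)

lemma vector_space_k: "Vector_Spaces.vector_space ((*) :: 'k \<Rightarrow> 'k \<Rightarrow> 'k)"
  by (simp add: vector_space_def module_def algebra_simps)

lemma lin_k_eps: "lin_k eps"
  using coalg by (simp add: coalg_def)

lemma sw_add: "bilin sc (*) f \<Longrightarrow> sw cm f (x + y) = sw cm f x + sw cm f y"
  and sw_scale: "bilin sc (*) f \<Longrightarrow> sw cm f (sc c x) = c * sw cm f x"
  using coalg by (simp_all add: coalg_def)

lemma coassoc: "trilin sc (*) f \<Longrightarrow>
    sw cm (\<lambda>a b. sw cm (\<lambda>c d. f c d b) a) x = sw cm (\<lambda>a b. sw cm (\<lambda>c d. f a c d) b) x"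
  using coalg by (simp add: coalg_def)

lemma counit_left: "sw cm (\<lambda>a b. sc (eps a) b) x = x"
  and counit_right: "sw cm (\<lambda>a b. sc (eps b) a) x = x"
  using coalg by (simp_all add: coalg_def)

lemma lin_k_iff: "lin_k \<phi> \<longleftrightarrow> (\<forall>x y. \<phi> (x + y) = \<phi> x + \<phi> y) \<and> (\<forall>c x. \<phi> (sc c x) = c * \<phi> x)"
  using vector_space vector_space_k by (simp add: Vector_Spaces.linear_iff)

lemma lin_h_iff: "lin_h \<phi> \<longleftrightarrow> (\<forall>x y. \<phi> (x + y) = \<phi> x + \<phi> y) \<and> (\<forall>c x. \<phi> (sc c x) = sc c (\<phi> x))"
  using vector_space by (simp add: Vector_Spaces.linear_iff)

lemma functional_ext:
  assumes "\<And>\<phi>. lin_k \<phi> \<Longrightarrow> \<phi> u = \<phi> v"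
  shows "u = v"
proof (rule ccontr)
  assume "u \<noteq> v"
  interpret vp: vector_space_pair sc "(*) :: 'k \<Rightarrow> 'k \<Rightarrow> 'k"
    using vector_space vector_space_k by (simp add: vector_space_pair_def)
  from \<open>u \<noteq> v\<close> have "\<not> vp.vs1.dependent {u - v}" by simp
  then obtain g where g: "lin_k g" "g (u - v) = 1"
    using vp.linear_independent_extend[of "{u - v}" "\<lambda>_. 1"] by auto
  have "g u = g (u - v) + g v" using g(1) unfolding lin_k_iff by (metis diff_add_cancel)
  with assms[OF g(1)] g(2) show False by simp
qed

definition multilin :: "nat \<Rightarrow> ((nat \<Rightarrow> 'h) \<Rightarrow> 'k) \<Rightarrow> bool" where
  "multilin n F \<longleftrightarrow> (\<forall>i\<le>n. \<forall>l. lin_k (\<lambda>v. F (l(i := v))))"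

lemma multilin_0: "multilin 0 F \<longleftrightarrow> (\<forall>l. lin_k (\<lambda>v. F (l(0 := v))))"
  by (simp add: multilin_def)

lemma multilin_Suc: "multilin (Suc n) F \<longleftrightarrow> (\<forall>l. lin_k (\<lambda>v. F (l(Suc n := v)))) \<and> multilin n F"
  by (auto simp: multilin_def le_Suc_eq)

lemma multilin_numeral:
  "multilin (numeral k) F \<longleftrightarrow> (\<forall>l. lin_k (\<lambda>v. F (l(numeral k := v)))) \<and> multilin (pred_numeral k) F"
  using multilin_Suc[of "pred_numeral k" F] by (simp add: numeral_eq_Suc)

lemma multilin_upd: "multilin (Suc n) F \<Longrightarrow> multilin n (\<lambda>l. F (l(Suc n := b)))"
  unfolding multilin_def
proof safe
  fix i l assume F: "\<forall>i\<le>Suc n. \<forall>l. lin_k (\<lambda>v. F (l(i := v)))" and "i \<le> n"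
  then have "(\<lambda>v. F (l(i := v, Suc n := b))) = (\<lambda>v. F ((l(Suc n := b))(i := v)))"
    by (simp add: fun_upd_twist)
  then show "lin_k (\<lambda>v. F (l(i := v, Suc n := b)))" using F \<open>i \<le> n\<close> by simp
qed

lemma trilin_k_iff: "trilin sc (*) f \<longleftrightarrow>
    (\<forall>x y. lin_k (f x y)) \<and> (\<forall>x z. lin_k (\<lambda>y. f x y z)) \<and> (\<forall>y z. lin_k (\<lambda>x. f x y z))"
  by (simp add: trilin_def)

lemma bilin_k_I: "(\<And>a. lin_k (\<lambda>v. f v a)) \<Longrightarrow> (\<And>a. lin_k (\<lambda>v. f a v)) \<Longrightarrow> bilin sc (*) f"
  by (simp add: bilin_def)

lemma bilin_h_I: "(\<And>a. lin_h (\<lambda>v. f v a)) \<Longrightarrow> (\<And>a. lin_h (\<lambda>v. f a v)) \<Longrightarrow> bilin sc sc f"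
  by (simp add: bilin_def)

lemma lin_h_id: "lin_h (\<lambda>v. v)"
  using vector_space by (simp add: lin_h_iff)

lemma lin_k_comp: "lin_k \<phi> \<Longrightarrow> lin_h E \<Longrightarrow> lin_k (\<lambda>v. \<phi> (E v))"
  unfolding lin_h_iff lin_k_iff by auto

lemma lin_h_comp: "lin_h \<phi> \<Longrightarrow> lin_h E \<Longrightarrow> lin_h (\<lambda>v. \<phi> (E v))"
  unfolding lin_h_iff by auto

lemma bilin_lin_h1: "bilin sc sc op \<Longrightarrow> lin_h E \<Longrightarrow> lin_h (\<lambda>v. op (E v) c)"
  and bilin_lin_h2: "bilin sc sc op \<Longrightarrow> lin_h E \<Longrightarrow> lin_h (\<lambda>v. op c (E v))"
  unfolding bilin_def lin_h_iff by auto

lemma lin_h_scale_right: "lin_h E \<Longrightarrow> lin_h (\<lambda>v. sc c (E v))"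
  and lin_h_scale_left: "lin_k e \<Longrightarrow> lin_h (\<lambda>v. sc (e v) w)"
  using vector_space unfolding lin_h_iff lin_k_iff by (simp_all add: vector_space_def module_def algebra_simps)

lemma lin_k_mult_right: "lin_k e \<Longrightarrow> lin_k (\<lambda>v. e v * c)"
  and lin_k_mult_left: "lin_k e \<Longrightarrow> lin_k (\<lambda>v. c * e v)"
  unfolding lin_k_iff by (simp_all add: algebra_simps)

lemma lin_k_eps_comp: "lin_h E \<Longrightarrow> lin_k (\<lambda>v. eps (E v))"
  by (rule lin_k_comp[OF lin_k_eps])

lemma lin_k_apply_sw: "lin_k \<phi> \<Longrightarrow> \<phi> (sw cm G x) = sw cm (\<lambda>a b. \<phi> (G a b)) x"
  and lin_h_apply_sw: "lin_h E \<Longrightarrow> E (sw cm G x) = sw cm (\<lambda>a b. E (G a b)) x"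
  by (simp_all add: linear_apply_sw)

lemma lin_k_sw_body: "(\<And>a b. lin_k (\<lambda>v. G v a b)) \<Longrightarrow> lin_k (\<lambda>v. sw cm (G v) x)"
  unfolding sw_def by (rule linear_sum_list_fun) (auto simp: split_def vector_space vector_space_k)

lemma lin_h_sw_body: "(\<And>a b. lin_h (\<lambda>v. G v a b)) \<Longrightarrow> lin_h (\<lambda>v. sw cm (G v) x)"
  unfolding sw_def by (rule linear_sum_list_fun) (auto simp: split_def vector_space)

lemma lin_k_sw_iter_body: "(\<And>l. lin_k (\<lambda>v. G v l)) \<Longrightarrow> lin_k (\<lambda>v. sw_iter cm n (G v) x)"
  unfolding sw_iter_def by (rule linear_sum_list_fun) (auto simp: vector_space vector_space_k)

lemma lin_h_sw_iter_body: "(\<And>l. lin_h (\<lambda>v. G v l)) \<Longrightarrow> lin_h (\<lambda>v. sw_iter cm n (G v) x)"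
  unfolding sw_iter_def by (rule linear_sum_list_fun) (auto simp: vector_space)

lemma lin_k_sw: "bilin sc (*) f \<Longrightarrow> lin_k (\<lambda>x. sw cm f x)"
  using sw_add sw_scale by (simp add: lin_k_iff)

lemma lin_h_sw:
  assumes "bilin sc sc G"
  shows "lin_h (\<lambda>x. sw cm G x)"
proof -
  have "bilin sc (*) (\<lambda>a b. \<phi> (G a b))" if "lin_k \<phi>" for \<phi>
    using assms that unfolding bilin_def lin_h_iff lin_k_iff by auto
  then have "\<phi> (sw cm G (x + y)) = \<phi> (sw cm G x + sw cm G y)"
    "\<phi> (sw cm G (sc c x)) = \<phi> (sc c (sw cm G x))" if "lin_k \<phi>" for \<phi> x y c
    using that by (simp_all add: lin_k_apply_sw sw_add sw_scale lin_k_iff)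
  then show ?thesis unfolding lin_h_iff by (auto intro: functional_ext)
qed

lemma lin_k_sw_iter: "multilin n F \<Longrightarrow> lin_k (\<lambda>x. sw_iter cm n F x)"
proof (induction n arbitrary: F)
  case 0
  then show ?case by (simp add: sw_iter_0 multilin_def)
next
  case (Suc n)
  have "bilin sc (*) (\<lambda>a b. sw_iter cm n (\<lambda>l. F (l(Suc n := b))) a)"
  proof (rule bilin_k_I)
    fix b show "lin_k (\<lambda>a. sw_iter cm n (\<lambda>l. F (l(Suc n := b))) a)"
      by (rule Suc.IH[OF multilin_upd[OF Suc.prems]])
  next
    fix a show "lin_k (\<lambda>b. sw_iter cm n (\<lambda>l. F (l(Suc n := b))) a)"
      by (rule lin_k_sw_iter_body) (use Suc.prems in \<open>auto simp: multilin_def\<close>)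
  qed
  then show ?case unfolding sw_iter_Suc by (rule lin_k_sw)
qed

lemma lin_k_sw_comp: "bilin sc (*) G \<Longrightarrow> lin_h E \<Longrightarrow> lin_k (\<lambda>v. sw cm G (E v))"
  by (rule lin_k_comp[OF lin_k_sw])

lemma lin_h_sw_comp: "bilin sc sc G \<Longrightarrow> lin_h E \<Longrightarrow> lin_h (\<lambda>v. sw cm G (E v))"
  by (rule lin_h_comp[OF lin_h_sw])

lemma lin_k_sw_iter_comp: "multilin n F \<Longrightarrow> lin_h E \<Longrightarrow> lin_k (\<lambda>v. sw_iter cm n F (E v))"
  by (rule lin_k_comp[OF lin_k_sw_iter])

lemmas coalgebra_lin_rules = lin_h_id lin_k_eps_comp lin_h_scale_left lin_h_scale_right
  lin_k_mult_right lin_k_mult_left lin_k_sw_body lin_h_sw_body lin_k_sw_iter_body lin_h_sw_iter_body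
  lin_k_sw_comp lin_k_sw_iter_comp lin_h_sw_comp bilin_k_I bilin_h_I

lemma sw_iter_split_last_leg:
  assumes F: "multilin (Suc (Suc n)) F"
  shows "sw_iter cm (Suc n) (\<lambda>l. sw cm (\<lambda>c d. F (leg_split (Suc n) c d l)) (l (Suc n))) x
       = sw_iter cm (Suc (Suc n)) F x"
proof -
  define g where "g = (\<lambda>a c d. sw_iter cm n (\<lambda>l. F (l(Suc n := c, Suc (Suc n) := d))) a)"
  have "trilin sc (*) g"
    unfolding trilin_k_iff g_def
  proof safe
    fix a c show "lin_k (\<lambda>d. sw_iter cm n (\<lambda>l. F (l(Suc n := c, Suc (Suc n) := d))) a)"
      by (rule lin_k_sw_iter_body) (use F in \<open>auto simp: multilin_def\<close>)
  next
    fix a d show "lin_k (\<lambda>c. sw_iter cm n (\<lambda>l. F (l(Suc n := c, Suc (Suc n) := d))) a)"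
    proof (rule lin_k_sw_iter_body)
      fix l
      have "(\<lambda>c. F (l(Suc n := c, Suc (Suc n) := d))) = (\<lambda>c. F ((l(Suc (Suc n) := d))(Suc n := c)))"
        by (simp add: fun_upd_twist)
      then show "lin_k (\<lambda>c. F (l(Suc n := c, Suc (Suc n) := d)))" using F by (simp add: multilin_def)
    qed
  next
    fix c d show "lin_k (\<lambda>a. sw_iter cm n (\<lambda>l. F (l(Suc n := c, Suc (Suc n) := d))) a)"
      by (rule lin_k_sw_iter) (rule multilin_upd[OF multilin_upd[OF F]])
  qed
  have split: "leg_split (Suc n) c d (l(Suc n := b)) = l(Suc n := c, Suc (Suc n) := d)"
    if "l \<in> set (cm_legs cm n a)" for l a b c d
    using cm_legs_support[OF that] by (auto simp: leg_split_def fun_eq_iff)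
  have "sw_iter cm (Suc n) (\<lambda>l. sw cm (\<lambda>c d. F (leg_split (Suc n) c d l)) (l (Suc n))) x
      = sw cm (\<lambda>a b. sw_iter cm n (\<lambda>l. sw cm (\<lambda>c d. F (l(Suc n := c, Suc (Suc n) := d))) b) a) x"
    unfolding sw_iter_Suc
    by (intro arg_cong[where f="\<lambda>G. sw cm G x"] ext sw_iter_cong_legs) (simp add: split)
  also have "\<dots> = sw cm (\<lambda>a b. sw cm (\<lambda>c d. g a c d) b) x"
    unfolding g_def by (simp only: sw_sw_iter_swap)
  also have "\<dots> = sw cm (\<lambda>a b. sw cm (\<lambda>c d. g c d b) a) x"
    using coassoc[OF \<open>trilin sc (*) g\<close>] by simp
  also have "\<dots> = sw_iter cm (Suc (Suc n)) F x"
    unfolding sw_iter_Suc g_def by simp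
  finally show ?thesis .
qed

lemma sw_iter_split_leg:
  assumes "i \<le> n" "multilin (Suc n) F"
  shows "sw_iter cm n (\<lambda>l. sw cm (\<lambda>c d. F (leg_split i c d l)) (l i)) x = sw_iter cm (Suc n) F x"
  using assms
proof (induction n arbitrary: F x i)
  case 0
  then have "i = 0" by simp
  moreover have "leg_split 0 c d ((\<lambda>_. 0)(0 := x)) = ((\<lambda>_. 0)(0 := c))(Suc 0 := d)" for c d
    by (auto simp: leg_split_def fun_eq_iff)
  ultimately show ?case by (simp add: sw_iter_Suc sw_iter_0)
next
  case (Suc n)
  show ?case
  proof (cases "i = Suc n")
    case True
    then show ?thesis using sw_iter_split_last_leg[OF Suc.prems(2)] by simp
  next
    case False
    with Suc.prems have i: "i \<le> n" by simp
    have split: "leg_split i c d (l(Suc n := b)) = (leg_split i c d l)(Suc (Suc n) := b)" for c d l b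
      using i by (auto simp: leg_split_def fun_eq_iff)
    have "sw_iter cm (Suc n) (\<lambda>l. sw cm (\<lambda>c d. F (leg_split i c d l)) (l i)) x
      = sw cm (\<lambda>a b. sw_iter cm n (\<lambda>l. sw cm (\<lambda>c d. F ((leg_split i c d l)(Suc (Suc n) := b))) (l i)) a) x"
      unfolding sw_iter_Suc using i by (simp add: split)
    also have "\<dots> = sw cm (\<lambda>a b. sw_iter cm (Suc n) (\<lambda>l. F (l(Suc (Suc n) := b))) a) x"
      using Suc.IH[OF i multilin_upd[OF Suc.prems(2)]] by (simp del: fun_upd_apply)
    also have "\<dots> = sw_iter cm (Suc (Suc n)) F x"
      unfolding sw_iter_Suc[of cm "Suc n"] ..
    finally show ?thesis .
  qed
qed

text \<open>Coassociativity in the form used for normalisation: a Sweedler sum over leg \<open>i\<close> of an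
  iterated coproduct becomes an iterated coproduct with one more leg.\<close>

lemma sw_iter_merge_leg:
  assumes "i \<le> n" "\<And>l v c d. G (l(i := v)) c d = G l c d"
    and "multilin (Suc n) (\<lambda>m. G (leg_del i m) (m i) (m (Suc i)))"
  shows "sw_iter cm n (\<lambda>l. sw cm (\<lambda>c d. G l c d) (l i)) x
       = sw_iter cm (Suc n) (\<lambda>m. G (leg_del i m) (m i) (m (Suc i))) x"
proof -
  have "G l c d = G (leg_del i (leg_split i c d l)) (leg_split i c d l i) (leg_split i c d l (Suc i))"
    for l c d
    by (simp add: leg_del_split assms(2)) (simp add: leg_split_def)
  then show ?thesis
    using sw_iter_split_leg[OF assms(1,3), of x] by simp
qed

lemma sw_iter_pull_sw:
  "sw_iter cm n (\<lambda>l. sw cm (\<lambda>c d. G l c d) z) x = sw cm (\<lambda>c d. sw_iter cm n (\<lambda>l. G l c d) x) z"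
  by (simp add: sw_sw_iter_swap)

lemma sw_iter_counit:
  assumes "multilin n F" "i \<le> n"
  shows "sw_iter cm n (\<lambda>l. sw cm (\<lambda>c d. F (l(i := sc (eps c) d))) (l i)) x = sw_iter cm n F x"
    and "sw_iter cm n (\<lambda>l. sw cm (\<lambda>c d. F (l(i := sc (eps d) c))) (l i)) x = sw_iter cm n F x"
proof -
  have L: "lin_k (\<lambda>v. F (l(i := v)))" for l using assms by (simp add: multilin_def)
  show "sw_iter cm n (\<lambda>l. sw cm (\<lambda>c d. F (l(i := sc (eps c) d))) (l i)) x = sw_iter cm n F x"
    by (rule sw_iter_cong) (simp add: lin_k_apply_sw[OF L, symmetric] counit_left)
  show "sw_iter cm n (\<lambda>l. sw cm (\<lambda>c d. F (l(i := sc (eps d) c))) (l i)) x = sw_iter cm n F x"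
    by (rule sw_iter_cong) (simp add: lin_k_apply_sw[OF L, symmetric] counit_right)
qed

lemma multilin_merge_legs:
  assumes F: "multilin n F" and i: "i \<le> n"
    and g1: "\<And>L e. lin_k (\<lambda>v. F (L(i := g e v)))" and g2: "\<And>L w. lin_k (\<lambda>v. F (L(i := g v w)))"
  shows "multilin (Suc n) (\<lambda>m. F ((leg_del i m)(i := g (m (Suc i)) (m i))))"
  unfolding multilin_def
proof (intro allI impI)
  fix j l assume j: "j \<le> Suc n"
  have LF: "j \<le> n \<Longrightarrow> lin_k (\<lambda>v. F (L(j := v)))" for j L using F by (simp add: multilin_def)
  let ?m = "\<lambda>v. (leg_del i (l(j := v)))(i := g ((l(j := v)) (Suc i)) ((l(j := v)) i))"
  consider "j < i" | "j = i" | "j = Suc i" | "j > Suc i" by linarith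
  then show "lin_k (\<lambda>v. F (?m v))"
  proof cases
    case 1
    then have "?m v = ((leg_del i l)(i := g (l (Suc i)) (l i)))(j := v)" for v
      by (auto simp: fun_eq_iff)
    then show ?thesis using LF[of j] 1 i by simp
  next
    case 2
    then have "?m v = (leg_del i l)(i := g (l (Suc i)) v)" for v
      by (auto simp: fun_eq_iff)
    then show ?thesis using g1 by simp
  next
    case 3
    then have "?m v = (leg_del i l)(i := g v (l i))" for v
      by (auto simp: fun_eq_iff)
    then show ?thesis using g2 by simp
  next
    case 4
    then have "?m v = ((leg_del i l)(i := g (l (Suc i)) (l i)))(j - 1 := v)" for v
      by (auto simp: fun_eq_iff)
    then show ?thesis using LF[of "j - 1"] 4 j by simp
  qed
qed

text \<open>The counit axioms read backwards: a leg can be split into two, one of which is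
  only seen through \<open>eps\<close>.\<close>

lemma sw_iter_counit_merge:
  assumes F: "multilin n F" and i: "i \<le> n"
  shows "sw_iter cm (Suc n) (\<lambda>m. F ((leg_del i m)(i := sc (eps (m (Suc i))) (m i)))) x = sw_iter cm n F x"
    and "sw_iter cm (Suc n) (\<lambda>m. F ((leg_del i m)(i := sc (eps (m i)) (m (Suc i))))) x = sw_iter cm n F x"
proof -
  have LF: "lin_k (\<lambda>v. F (L(i := v)))" for L using F i by (simp add: multilin_def)
  have lin1: "lin_k (\<lambda>v. F (L(i := sc e v)))" for L e
    using lin_k_comp[OF LF lin_h_scale_right[OF lin_h_id]] by simp
  have lin2: "lin_k (\<lambda>v. F (L(i := sc (eps v) w)))" for L w
    using lin_k_comp[OF LF lin_h_scale_left[OF lin_k_eps_comp[OF lin_h_id]]] by simp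
  have split: "(\<lambda>m. F ((leg_del i m)(i := g (m (Suc i)) (m i)))) (leg_split i c d l) = F (l(i := g d c))"
    for g c d l
    by (simp add: leg_del_split) (simp add: leg_split_def)
  show "sw_iter cm (Suc n) (\<lambda>m. F ((leg_del i m)(i := sc (eps (m (Suc i))) (m i)))) x = sw_iter cm n F x"
    using sw_iter_split_leg[OF i multilin_merge_legs[OF F i, where g="\<lambda>a b. sc (eps a) b"], of x]
      sw_iter_counit(2)[OF F i, of x] split[where g="\<lambda>a b. sc (eps a) b"] lin1 lin2 by simp
  show "sw_iter cm (Suc n) (\<lambda>m. F ((leg_del i m)(i := sc (eps (m i)) (m (Suc i))))) x = sw_iter cm n F x"
    using sw_iter_split_leg[OF i multilin_merge_legs[OF F i, where g="\<lambda>a b. sc (eps b) a"], of x]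
      sw_iter_counit(1)[OF F i, of x] split[where g="\<lambda>a b. sc (eps b) a"] lin1 lin2 by simp
qed

lemma sw_iter_counit_merge_inner:
  assumes "\<And>l. multilin m (G l)" "i \<le> m"
  shows "sw_iter cm n (\<lambda>l. sw_iter cm (Suc m) (\<lambda>k. G l ((leg_del i k)(i := sc (eps (k (Suc i))) (k i)))) y) x
       = sw_iter cm n (\<lambda>l. sw_iter cm m (G l) y) x"
  using sw_iter_counit_merge[OF assms] by (auto intro!: sw_iter_cong)

lemma bilin_scale_left: "bilin sc sc2 op \<Longrightarrow> op (sc c a) b = sc2 c (op a b)"
  and bilin_scale_right: "bilin sc sc2 op \<Longrightarrow> op a (sc c b) = sc2 c (op a b)"
  unfolding bilin_def Vector_Spaces.linear_iff by auto

lemma scale_scale: "sc c (sc d a) = sc (c * d) a"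
  and scale_one: "sc 1 a = a"
  using vector_space by (simp_all add: vector_space_def module_def)

lemma eps_scale: "eps (sc c a) = c * eps a"
  using lin_k_eps by (simp add: lin_k_iff)

lemma eps_sw: "eps (sw cm G z) = sw cm (\<lambda>a b. eps (G a b)) z"
  by (rule lin_k_apply_sw[OF lin_k_eps])

lemma mult_sw_left: "sw cm G z * (c::'k) = sw cm (\<lambda>a b. G a b * c) z"
  and mult_sw_right: "(c::'k) * sw cm G z = sw cm (\<lambda>a b. c * G a b) z"
  unfolding sw_def by (simp_all add: sum_list_mult_const sum_list_const_mult split_def)

lemma sw_sw_k: "bilin sc (*) G \<Longrightarrow> sw cm G (sw cm H z) = sw cm (\<lambda>a b. sw cm G (H a b)) z"
  by (rule lin_k_apply_sw[OF lin_k_sw])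

lemma lin_k_facts:
  assumes "lin_k \<phi>"
  shows "lin_h E \<Longrightarrow> lin_k (\<lambda>v. \<phi> (E v))" "\<phi> (sc k a) = k * \<phi> a"
    "\<phi> (sw cm G z) = sw cm (\<lambda>a b. \<phi> (G a b)) z"
  using lin_k_comp[OF assms] assms lin_k_apply_sw[OF assms] by (auto simp: lin_k_iff)

lemma bilin_k_facts:
  assumes f: "bilin sc (*) f"
  shows "lin_h E \<Longrightarrow> lin_k (\<lambda>v. f (E v) c)" "lin_h E \<Longrightarrow> lin_k (\<lambda>v. f c (E v))" "lin_k (f c)"
    "f (sc k a) b = k * f a b" "f a (sc k b) = k * f a b"
    "f (sw cm G z) c = sw cm (\<lambda>a b. f (G a b) c) z" "f c (sw cm G z) = sw cm (\<lambda>a b. f c (G a b)) z"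
proof -
  have l1: "lin_k (\<lambda>v. f v b)" and l2: "lin_k (f a)" for a b
    using f by (auto simp: bilin_def)
  show "lin_h E \<Longrightarrow> lin_k (\<lambda>v. f (E v) c)" "lin_h E \<Longrightarrow> lin_k (\<lambda>v. f c (E v))" "lin_k (f c)"
    using lin_k_comp[OF l1] lin_k_comp[OF l2] l2 by auto
  show "f (sc k a) b = k * f a b" "f a (sc k b) = k * f a b"
    using bilin_scale_left[OF f] bilin_scale_right[OF f] by auto
  show "f (sw cm G z) c = sw cm (\<lambda>a b. f (G a b) c) z" "f c (sw cm G z) = sw cm (\<lambda>a b. f c (G a b)) z"
    using lin_k_apply_sw[OF l1] lin_k_apply_sw[OF l2] by auto
qed

lemma trilin_k_facts:
  assumes f: "trilin sc (*) f"
  shows "lin_h E \<Longrightarrow> lin_k (\<lambda>v. f (E v) b c)" "lin_h E \<Longrightarrow> lin_k (\<lambda>v. f a (E v) c)"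
    "lin_h E \<Longrightarrow> lin_k (\<lambda>v. f a b (E v))"
    "f (sc k a) b c = k * f a b c" "f a (sc k b) c = k * f a b c" "f a b (sc k c) = k * f a b c"
    "f (sw cm G z) b c = sw cm (\<lambda>x y. f (G x y) b c) z"
    "f a (sw cm G z) c = sw cm (\<lambda>x y. f a (G x y) c) z"
    "f a b (sw cm G z) = sw cm (\<lambda>x y. f a b (G x y)) z"
proof -
  have l1: "lin_k (\<lambda>v. f v b c)" and l2: "lin_k (\<lambda>v. f a v c)" and l3: "lin_k (\<lambda>v. f a b v)" for a b c
    using f unfolding trilin_def by auto
  show "lin_h E \<Longrightarrow> lin_k (\<lambda>v. f (E v) b c)" "lin_h E \<Longrightarrow> lin_k (\<lambda>v. f a (E v) c)"
    "lin_h E \<Longrightarrow> lin_k (\<lambda>v. f a b (E v))"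
    using lin_k_comp[OF l1] lin_k_comp[OF l2] lin_k_comp[OF l3] by auto
  show "f (sc k a) b c = k * f a b c" "f a (sc k b) c = k * f a b c" "f a b (sc k c) = k * f a b c"
    using l1 l2 l3 by (auto simp: lin_k_iff)
  show "f (sw cm G z) b c = sw cm (\<lambda>x y. f (G x y) b c) z"
    "f a (sw cm G z) c = sw cm (\<lambda>x y. f a (G x y) c) z"
    "f a b (sw cm G z) = sw cm (\<lambda>x y. f a b (G x y)) z"
    using lin_k_apply_sw[OF l1] lin_k_apply_sw[OF l2] lin_k_apply_sw[OF l3] by auto
qed

end

locale yd_post_hopf =
  fixes sc :: "'k::field \<Rightarrow> 'h::ab_group_add \<Rightarrow> 'h"
    and mul :: "'h \<Rightarrow> 'h \<Rightarrow> 'h" and one :: 'h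
    and cm :: "'h \<Rightarrow> ('h \<times> 'h) list" and eps :: "'h \<Rightarrow> 'k" and S :: "'h \<Rightarrow> 'h"
    and act beta :: "'h \<Rightarrow> 'h \<Rightarrow> 'h"
  assumes ydph: "ydph sc mul one cm eps S act beta"
begin

sublocale coalgebra sc cm eps
  using ydph by unfold_locales (simp add: ydph_def)

abbreviation bul where "bul \<equiv> pbul mul cm act"
abbreviation T where "T \<equiv> pS cm S beta"
abbreviation lh where "lh \<equiv> plh mul cm S act beta"

lemma mul_bilin: "bilin sc sc mul"
  and mul_assoc: "mul (mul x y) z = mul x (mul y z)"
  and mul_one_left [simp]: "mul one x = x"
  and mul_one_right [simp]: "mul x one = x"
  using ydph by (simp_all add: ydph_def alg_def)

lemma lin_h_S: "lin_h S"
  and mul_S_conv: "sw cm (\<lambda>a b. mul a (S b)) x = sc (eps x) one"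
  and S_mul_conv: "sw cm (\<lambda>a b. mul (S a) b) x = sc (eps x) one"
  and act_bilin: "bilin sc sc act"
  and cm_act: "bilin sc (*) f \<Longrightarrow>
    sw cm f (act x y) = sw cm (\<lambda>x1 x2. sw cm (\<lambda>y1 y2. f (act x1 y1) (act x2 y2)) y) x"
  and eps_act: "eps (act x y) = eps x * eps y"
  and act_mul: "act x (mul y z) = sw cm (\<lambda>x1 x2. mul (act x1 y) (act x2 z)) x"
  and act_act: "act x (act y z) = act (sw cm (\<lambda>x1 x2. mul x1 (act x2 y)) x) z"
  and lin_h_beta_right: "lin_h (beta x)"
  and lin_h_beta_left: "lin_h (\<lambda>x. beta x y)"
  and act_beta_conv: "sw cm (\<lambda>x1 x2. act x1 (beta x2 y)) x = sc (eps x) y"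
  and beta_act_conv: "sw cm (\<lambda>x1 x2. beta x1 (act x2 y)) x = sc (eps x) y"
  and eps_mul: "eps (mul a b) = eps a * eps b"
  and eps_one [simp]: "eps one = 1"
  and cm_one: "bilin sc (*) f \<Longrightarrow> sw cm f one = f one one"
  and cm_mul: "bilin sc (*) f \<Longrightarrow> sw cm f (mul x y)
    = sw4 cm (\<lambda>x1 x2 x3 x4. sw cm (\<lambda>y1 y2. f (mul x1 (act x2 (beta x4 y1))) (mul x3 y2)) y) x"
  and cm_T: "bilin sc (*) f \<Longrightarrow> sw cm f (T x) = sw cm (\<lambda>x1 x2. f (T x2) (T x1)) x"
  and act_lh_swap: "bilin sc (*) f \<Longrightarrow>
      sw cm (\<lambda>x1 x2. sw cm (\<lambda>y1 y2. f (act x1 y1) (lh x2 y2)) y) x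
    = sw cm (\<lambda>x1 x2. sw cm (\<lambda>y1 y2. f (act x2 y2) (lh x1 y1)) y) x"
  using ydph by (simp_all add: ydph_def)

lemma lin_h_mul1: "lin_h E \<Longrightarrow> lin_h (\<lambda>v. mul (E v) c)"
  and lin_h_mul2: "lin_h E \<Longrightarrow> lin_h (\<lambda>v. mul c (E v))"
  and lin_h_act1: "lin_h E \<Longrightarrow> lin_h (\<lambda>v. act (E v) c)"
  and lin_h_act2: "lin_h E \<Longrightarrow> lin_h (\<lambda>v. act c (E v))"
  and lin_h_beta1: "lin_h E \<Longrightarrow> lin_h (\<lambda>v. beta (E v) c)"
  and lin_h_beta2: "lin_h E \<Longrightarrow> lin_h (\<lambda>v. beta c (E v))"
  and lin_h_S_comp: "lin_h E \<Longrightarrow> lin_h (\<lambda>v. S (E v))"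
  by (auto intro: bilin_lin_h1 bilin_lin_h2 mul_bilin act_bilin lin_h_comp
      lin_h_beta_left lin_h_beta_right lin_h_S)

lemmas lin_rules = coalgebra_lin_rules lin_h_mul1 lin_h_mul2 lin_h_act1 lin_h_act2
  lin_h_beta1 lin_h_beta2 lin_h_S_comp

lemma mul_sw1: "mul (sw cm G z) c = sw cm (\<lambda>a b. mul (G a b) c) z"
  and mul_sw2: "mul c (sw cm G z) = sw cm (\<lambda>a b. mul c (G a b)) z"
  and act_sw1: "act (sw cm G z) c = sw cm (\<lambda>a b. act (G a b) c) z"
  and act_sw2: "act c (sw cm G z) = sw cm (\<lambda>a b. act c (G a b)) z"
  and beta_sw1: "beta (sw cm G z) c = sw cm (\<lambda>a b. beta (G a b) c) z"
  and beta_sw2: "beta c (sw cm G z) = sw cm (\<lambda>a b. beta c (G a b)) z"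
  and S_sw: "S (sw cm G z) = sw cm (\<lambda>a b. S (G a b)) z"
  and scale_sw: "sc r (sw cm G z) = sw cm (\<lambda>a b. sc r (G a b)) z"
  by (rule lin_h_apply_sw; simp add: lin_rules)+

lemma mul_scale1: "mul (sc c a) b = sc c (mul a b)"
  and mul_scale2: "mul a (sc c b) = sc c (mul a b)"
  and act_scale1: "act (sc c a) b = sc c (act a b)"
  and act_scale2: "act a (sc c b) = sc c (act a b)"
  using bilin_scale_left[OF mul_bilin] bilin_scale_right[OF mul_bilin]
    bilin_scale_left[OF act_bilin] bilin_scale_right[OF act_bilin] by blast+

lemma beta_scale1: "beta (sc c a) b = sc c (beta a b)"
  and beta_scale2: "beta a (sc c b) = sc c (beta a b)"
  and S_scale: "S (sc c a) = sc c (S a)"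
  using lin_h_beta_left lin_h_beta_right lin_h_S by (simp_all add: lin_h_iff)

lemmas scale_simps = mul_scale1 mul_scale2 act_scale1 act_scale2 beta_scale1 beta_scale2 S_scale
  eps_scale scale_scale scale_one eps_act eps_mul

text \<open>Normal form of a Sweedler expression under a functional: all sums pulled outward and
  nested coproducts merged into one iterated coproduct, so that expressions that agree by
  coassociativity become syntactically equal. To compare expressions in free variables \<open>x, y\<close>
  these are first written as trivial sums \<open>sw_iter cm 0\<close> over a single leg.\<close>

lemmas sweedler_nf = sw_iter_merge_leg sw_iter_pull_sw mul_sw1 mul_sw2 act_sw1 act_sw2 beta_sw1
  beta_sw2 S_sw scale_sw eps_sw mult_sw_left mult_sw_right multilin_0 multilin_Suc multilin_numeral
  lin_rules numeral_2_eq_2[symmetric] scale_simps mul_assoc mult_ac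
  lin_k_sw sw_sw_k sw_scale

lemma cm_one_h: assumes "bilin sc sc G" shows "sw cm G one = G one one"
proof (rule functional_ext)
  fix \<phi> assume p: "lin_k \<phi>"
  have "bilin sc (*) (\<lambda>a b. \<phi> (G a b))"
    using assms p unfolding bilin_def lin_h_iff lin_k_iff by auto
  then show "\<phi> (sw cm G one) = \<phi> (G one one)"
    by (simp add: lin_k_apply_sw[OF p] cm_one)
qed

lemma act_beta_conv_ctx: "lin_k \<Psi> \<Longrightarrow> sw cm (\<lambda>c d. \<Psi> (act c (beta d w))) z = \<Psi> (sc (eps z) w)"
  and beta_act_conv_ctx: "lin_k \<Psi> \<Longrightarrow> sw cm (\<lambda>c d. \<Psi> (beta c (act d w))) z = \<Psi> (sc (eps z) w)"
  and mul_S_conv_ctx: "lin_k \<Psi> \<Longrightarrow> sw cm (\<lambda>c d. \<Psi> (mul c (S d))) z = \<Psi> (sc (eps z) one)"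
  and S_mul_conv_ctx: "lin_k \<Psi> \<Longrightarrow> sw cm (\<lambda>c d. \<Psi> (mul (S c) d)) z = \<Psi> (sc (eps z) one)"
  by (metis (no_types) lin_k_apply_sw act_beta_conv beta_act_conv mul_S_conv S_mul_conv)+

text \<open>By (P1) \<open>x \<mapsto> x \<rightharpoonup> 1\<close> is a convolution idempotent, and it has convolution inverse
  \<open>x \<mapsto> S(x \<rightharpoonup> 1)\<close> because \<open>\<rightharpoonup>\<close> is comultiplicative; so it is the convolution unit \<open>\<epsilon>(x) 1\<close>.\<close>

lemma act_one_right: "act x one = sc (eps x) one"
proof (rule functional_ext)
  fix \<phi> assume p: "lin_k \<phi>"
  note P = lin_k_facts[OF p]
  have idem: "act x one = sw cm (\<lambda>a b. mul (act a one) (act b one)) x" for x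
    using act_mul[of x one one] by simp
  have inverse: "sw cm (\<lambda>a b. mul (act a one) (S (act b one))) x = sc (eps x) one" for x
  proof -
    have "sw cm (\<lambda>a b. mul a (S b)) (act x one) = sw cm (\<lambda>a b. mul (act a one) (S (act b one))) x"
    proof (rule functional_ext)
      fix \<psi> assume q: "lin_k \<psi>"
      show "\<psi> (sw cm (\<lambda>a b. mul a (S b)) (act x one)) = \<psi> (sw cm (\<lambda>a b. mul (act a one) (S (act b one))) x)"
        by (simp add: lin_k_facts[OF q] cm_act cm_one lin_rules bilin_k_facts)
    qed
    then show ?thesis using mul_S_conv[of "act x one"] by (simp add: eps_act)
  qed
  have "\<phi> (act x one) = sw_iter cm 0 (\<lambda>l. sw cm (\<lambda>c d. \<phi> (act (sc (eps d) c) one)) (l 0)) x"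
    using sw_iter_counit(2)[of 0 "\<lambda>l. \<phi> (act (l 0) one)" 0 x] by (simp add: sweedler_nf P sw_iter_0)
  also have "\<dots> = sw_iter cm 1 (\<lambda>m. \<phi> (mul (act (m 0) one) (sc (eps (m 1)) one))) x"
    by (simp add: sweedler_nf P)
  also have "\<dots> = sw_iter cm 1 (\<lambda>m. \<phi> (mul (act (m 0) one) (sw cm (\<lambda>a b. mul (act a one) (S (act b one))) (m 1)))) x"
    by (simp add: inverse)
  also have "\<dots> = sw_iter cm 1 (\<lambda>l. \<phi> (mul (sw cm (\<lambda>a b. mul (act a one) (act b one)) (l 0)) (S (act (l 1) one)))) x"
    by (simp add: sweedler_nf P)
  also have "\<dots> = sw_iter cm 0 (\<lambda>l. \<phi> (sw cm (\<lambda>a b. mul (act a one) (S (act b one))) (l 0))) x"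
    by (simp add: idem[symmetric]) (simp add: sweedler_nf P)
  also have "\<dots> = \<phi> (sc (eps x) one)" by (simp add: inverse sw_iter_0)
  finally show "\<phi> (act x one) = \<phi> (sc (eps x) one)" .
qed

lemma one_act: "act one y = y"
proof -
  have a: "act one (beta one y) = y" for y
    using act_beta_conv[of y one] by (simp add: cm_one_h lin_rules scale_one)
  have b: "beta one (act one y) = y" for y
    using beta_act_conv[of y one] by (simp add: cm_one_h lin_rules scale_one)
  have c: "act one (act one z) = act one z" for z
    using act_act[of one one z] by (simp add: cm_one_h lin_rules act_one_right scale_one)
  have "act one y = beta one (act one (act one y))" by (rule b[symmetric])
  also have "\<dots> = y" by (simp add: c b)
  finally show ?thesis .
qed

lemma eps_S: "eps (S x) = eps x"
proof -
  have "eps (S x) = eps (S (sw cm (\<lambda>a b. sc (eps a) b) x))" by (simp add: counit_left)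
  also have "\<dots> = eps (sw cm (\<lambda>a b. mul a (S b)) x)" by (simp add: sweedler_nf)
  also have "\<dots> = eps x" by (simp add: mul_S_conv scale_simps)
  finally show ?thesis .
qed

lemma eps_beta: "eps (beta x y) = eps x * eps y"
proof -
  have "eps (beta x y) = eps (beta (sw cm (\<lambda>a b. sc (eps a) b) x) y)" by (simp add: counit_left)
  also have "\<dots> = eps (sw cm (\<lambda>a b. act a (beta b y)) x)" by (simp add: sweedler_nf)
  also have "\<dots> = eps x * eps y" by (simp add: act_beta_conv scale_simps)
  finally show ?thesis .
qed

lemma eps_T: "eps (T x) = eps x"
proof -
  have "eps (T x) = eps (sw cm (\<lambda>a b. sc (eps a) b) x)" by (simp add: pS_def sweedler_nf eps_beta eps_S)
  also have "\<dots> = eps x" by (simp add: counit_left)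
  finally show ?thesis .
qed

lemma eps_bul: "eps (bul x y) = eps x * eps y"
proof -
  have "eps (bul x y) = eps (sw cm (\<lambda>a b. sc (eps a) b) x) * eps y" by (simp add: pbul_def sweedler_nf mult.assoc)
  also have "\<dots> = eps x * eps y" by (simp add: counit_left)
  finally show ?thesis .
qed

lemma bul_one_right: "bul x one = x"
proof -
  have "bul x one = sw cm (\<lambda>a b. sc (eps b) a) x" by (simp add: pbul_def act_one_right sweedler_nf)
  also have "\<dots> = x" by (rule counit_right)
  finally show ?thesis .
qed

lemma bul_one_left: "bul one y = y"
  by (simp add: pbul_def cm_one_h lin_rules one_act)

text \<open>(P5) expands the coproduct of the product, and (P3) cancels the resulting
  \<open>\<beta>(x\<^sub>4)\<close> against \<open>x\<^sub>5 \<rightharpoonup> -\<close>.\<close>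

lemma cm_bul:
  assumes f: "bilin sc (*) f"
  shows "sw cm f (bul x y) = sw cm (\<lambda>a1 a2. sw cm (\<lambda>b1 b2. f (bul a1 b1) (bul a2 b2)) y) x"
proof -
  note F = bilin_k_facts[OF f]
  have "sw cm f (bul x y) = sw_iter cm 0 (\<lambda>l. sw_iter cm 0 (\<lambda>k. sw cm (\<lambda>a1 a2. sw cm f (mul a1 (act a2 (k 0)))) (l 0)) y) x"
    by (simp add: sw_iter_0 pbul_def lin_k_apply_sw[OF lin_k_sw[OF f]])
  also have "\<dots> = sw_iter cm 5 (\<lambda>m. sw_iter cm 1 (\<lambda>k. f (mul (m 0) (act (m 1) (beta (m 3) (act (m 4) (k 0))))) (mul (m 2) (act (m 5) (k 1)))) y) x"
    by (simp add: sweedler_nf F cm_mul[OF f] cm_act sw4_def sw3_def)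
  also have "\<dots> = sw_iter cm 4 (\<lambda>l. sw_iter cm 1 (\<lambda>k. sw cm (\<lambda>c d. f (mul (l 0) (act (l 1) (beta c (act d (k 0))))) (mul (l 2) (act (l 4) (k 1)))) (l 3)) y) x"
    by (simp add: sweedler_nf F)
  also have "\<dots> = sw_iter cm 4 (\<lambda>l. sw_iter cm 1 (\<lambda>k. f (mul (l 0) (act (l 1) (sc (eps (l 3)) (k 0)))) (mul (l 2) (act (l 4) (k 1)))) y) x"
    by (intro sw_iter_cong beta_act_conv_ctx) (simp add: sweedler_nf F)
  also have "\<dots> = sw_iter cm 3 (\<lambda>l. sw cm (\<lambda>c d. sw_iter cm 1 (\<lambda>k. f (mul (l 0) (act (l 1) (k 0))) (mul (sc (eps d) c) (act (l 3) (k 1)))) y) (l 2)) x"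
    by (simp add: sweedler_nf F)
  also have "\<dots> = sw_iter cm 3 (\<lambda>l. sw_iter cm 1 (\<lambda>k. f (mul (l 0) (act (l 1) (k 0))) (mul (l 2) (act (l 3) (k 1)))) y) x"
    using sw_iter_counit(2)[of 3 "\<lambda>l. sw_iter cm 1 (\<lambda>k. f (mul (l 0) (act (l 1) (k 0))) (mul (l 2) (act (l 3) (k 1)))) y" 2 x]
    by (simp add: sweedler_nf F)
  also have "\<dots> = sw cm (\<lambda>a1 a2. sw cm (\<lambda>b1 b2. f (bul a1 b1) (bul a2 b2)) y) x"
  proof -
    have "sw_iter cm 0 (\<lambda>l. sw_iter cm 0 (\<lambda>k. sw cm (\<lambda>a1 a2. sw cm (\<lambda>b1 b2. f (bul a1 b1) (bul a2 b2)) (k 0)) (l 0)) y) x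
      = sw_iter cm 3 (\<lambda>l. sw_iter cm 1 (\<lambda>k. f (mul (l 0) (act (l 1) (k 0))) (mul (l 2) (act (l 3) (k 1)))) y) x"
      by (simp add: sweedler_nf F pbul_def)
    then show ?thesis by (simp add: sw_iter_0)
  qed
  finally show ?thesis .
qed

lemma bul_assoc: "bul (bul x y) z = bul x (bul y z)"
proof (rule functional_ext)
  fix \<phi> assume p: "lin_k \<phi>"
  note P = lin_k_facts[OF p]
  have "\<phi> (bul (bul x y) z) = sw cm (\<lambda>a b. \<phi> (mul a (act b z))) (bul x y)"
    by (simp add: pbul_def P)
  also have "\<dots> = sw cm (\<lambda>a1 a2. sw cm (\<lambda>b1 b2. \<phi> (mul (bul a1 b1) (act (bul a2 b2) z))) y) x"
    by (rule cm_bul) (simp add: lin_rules P)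
  also have "\<dots> = \<phi> (bul x (bul y z))"
  proof -
    have "sw_iter cm 0 (\<lambda>l. sw_iter cm 0 (\<lambda>k. sw cm (\<lambda>a1 a2. sw cm (\<lambda>b1 b2. \<phi> (mul (bul a1 b1) (act (bul a2 b2) z))) (k 0)) (l 0)) y) x
      = sw_iter cm 0 (\<lambda>l. sw_iter cm 0 (\<lambda>k. \<phi> (bul (l 0) (bul (k 0) z))) y) x"
      by (simp add: sweedler_nf P pbul_def act_mul act_act)
    then show ?thesis by (simp add: sw_iter_0)
  qed
  finally show "\<phi> (bul (bul x y) z) = \<phi> (bul x (bul y z))" .
qed

lemma bul_bilin: "bilin sc sc bul"
  by (simp add: pbul_def lin_rules)

lemma lin_h_T: "lin_h T"
  unfolding pS_def by (rule lin_h_sw) (simp add: lin_rules)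

lemma bul_T_conv: "sw cm (\<lambda>a b. bul a (T b)) x = sc (eps x) one"
proof (rule functional_ext)
  fix \<phi> assume p: "lin_k \<phi>"
  note P = lin_k_facts[OF p]
  have "\<phi> (sw cm (\<lambda>a b. bul a (T b)) x) = sw_iter cm 0 (\<lambda>l. \<phi> (sw cm (\<lambda>a b. bul a (T b)) (l 0))) x"
    by (simp add: sw_iter_0)
  also have "\<dots> = sw_iter cm 2 (\<lambda>l. sw cm (\<lambda>c d. \<phi> (mul (l 0) (act c (beta d (S (l 2)))))) (l 1)) x"
    by (simp add: sweedler_nf P pbul_def pS_def)
  also have "\<dots> = sw_iter cm 2 (\<lambda>l. \<phi> (mul (l 0) (sc (eps (l 1)) (S (l 2))))) x"
    by (intro sw_iter_cong act_beta_conv_ctx) (simp add: sweedler_nf P)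
  also have "\<dots> = sw_iter cm 1 (\<lambda>l. sw cm (\<lambda>c d. \<phi> (mul (l 0) (S ((l(1 := sc (eps c) d)) 1)))) (l 1)) x"
    by (simp add: sweedler_nf P)
  also have "\<dots> = sw_iter cm 1 (\<lambda>l. \<phi> (mul (l 0) (S (l 1)))) x"
    using sw_iter_counit(1)[of 1 "\<lambda>l. \<phi> (mul (l 0) (S (l 1)))" 1 x] by (simp add: sweedler_nf P)
  also have "\<dots> = sw_iter cm 0 (\<lambda>l. sw cm (\<lambda>c d. \<phi> (mul c (S d))) (l 0)) x"
    by (simp add: sweedler_nf P)
  also have "\<dots> = \<phi> (sc (eps x) one)"
    by (simp add: mul_S_conv_ctx P sw_iter_0 lin_rules)
  finally show "\<phi> (sw cm (\<lambda>a b. bul a (T b)) x) = \<phi> (sc (eps x) one)" .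
qed

lemma act_act_T_conv: "sw cm (\<lambda>c d. act c (act (T d) y)) z = sc (eps z) y"
proof -
  have "sw cm (\<lambda>c d. act c (act (T d) y)) z = act (sw cm (\<lambda>a b. bul a (T b)) z) y"
    by (simp add: act_act act_sw1 pbul_def)
  also have "\<dots> = sc (eps z) y" by (simp add: bul_T_conv scale_simps one_act)
  finally show ?thesis .
qed

lemma act_T: "act (T x) y = beta x y"
proof (rule functional_ext)
  fix \<phi> assume p: "lin_k \<phi>"
  note P = lin_k_facts[OF p]
  have "\<phi> (beta x y) = sw_iter cm 0 (\<lambda>l. sw cm (\<lambda>c d. \<phi> (beta ((l(0 := sc (eps d) c)) 0) y)) (l 0)) x"
    using sw_iter_counit(2)[of 0 "\<lambda>l. \<phi> (beta (l 0) y)" 0 x] by (simp add: sweedler_nf P sw_iter_0)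
  also have "\<dots> = sw_iter cm 1 (\<lambda>l. \<phi> (beta (l 0) (sc (eps (l 1)) y))) x"
    by (simp add: sweedler_nf P)
  also have "\<dots> = sw_iter cm 1 (\<lambda>l. \<phi> (beta (l 0) (sw cm (\<lambda>c d. act c (act (T d) y)) (l 1)))) x"
    by (simp add: act_act_T_conv)
  also have "\<dots> = sw_iter cm 1 (\<lambda>l. sw cm (\<lambda>c d. \<phi> (beta c (act d (act (T (l 1)) y)))) (l 0)) x"
    by (simp add: sweedler_nf P pS_def)
  also have "\<dots> = sw_iter cm 1 (\<lambda>l. \<phi> (sc (eps (l 0)) (act (T (l 1)) y))) x"
    by (intro sw_iter_cong beta_act_conv_ctx) (simp add: sweedler_nf P)
  also have "\<dots> = sw_iter cm 0 (\<lambda>l. \<phi> (act (T (sw cm (\<lambda>c d. sc (eps c) d) (l 0))) y)) x"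
    by (simp add: sweedler_nf P pS_def)
  also have "\<dots> = \<phi> (act (T x) y)" by (simp only: counit_left sw_iter_0) simp
  finally show "\<phi> (act (T x) y) = \<phi> (beta x y)" by simp
qed

lemma beta_one: "beta x one = sc (eps x) one"
  using act_T[of x one] by (simp add: act_one_right eps_T)

lemma beta_mul: "beta x (mul a b) = sw cm (\<lambda>x1 x2. mul (beta x2 a) (beta x1 b)) x"
proof (rule functional_ext)
  fix \<phi> assume p: "lin_k \<phi>"
  note P = lin_k_facts[OF p]
  have "\<phi> (beta x (mul a b)) = sw cm (\<lambda>c d. \<phi> (mul (act c a) (act d b))) (T x)"
    by (simp add: act_T[symmetric] act_mul P)
  also have "\<dots> = sw cm (\<lambda>x1 x2. \<phi> (mul (act (T x2) a) (act (T x1) b))) x"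
    by (rule cm_T) (simp add: lin_rules P)
  also have "\<dots> = \<phi> (sw cm (\<lambda>x1 x2. mul (beta x2 a) (beta x1 b)) x)"
    by (simp add: act_T P)
  finally show "\<phi> (beta x (mul a b)) = \<phi> (sw cm (\<lambda>x1 x2. mul (beta x2 a) (beta x1 b)) x)" .
qed

lemma bact_eq_act: "bact mul bul cm S = act"
proof (intro ext functional_ext)
  fix a b \<phi> assume p: "lin_k \<phi>"
  note P = lin_k_facts[OF p]
  have "\<phi> (bact mul bul cm S a b) = sw_iter cm 0 (\<lambda>l. \<phi> (bact mul bul cm S (l 0) b)) a"
    by (simp add: sw_iter_0)
  also have "\<dots> = sw_iter cm 1 (\<lambda>l. sw cm (\<lambda>c d. \<phi> (mul (mul (S c) d) (act (l 1) b))) (l 0)) a"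
    by (simp add: bact_def sweedler_nf P pbul_def)
  also have "\<dots> = sw_iter cm 1 (\<lambda>l. \<phi> (mul (sc (eps (l 0)) one) (act (l 1) b))) a"
    by (intro sw_iter_cong S_mul_conv_ctx) (simp add: sweedler_nf P)
  also have "\<dots> = sw_iter cm 0 (\<lambda>l. \<phi> (act (sw cm (\<lambda>c d. sc (eps c) d) (l 0)) b)) a"
    by (simp add: sweedler_nf P)
  also have "\<dots> = \<phi> (act a b)" by (simp add: counit_left sw_iter_0)
  finally show "\<phi> (bact mul bul cm S a b) = \<phi> (act a b)" .
qed

lemma T_bul_conv: "sw cm (\<lambda>a b. bul (T a) b) x = sc (eps x) one"
proof (rule functional_ext)
  fix \<phi> assume p: "lin_k \<phi>"
  note P = lin_k_facts[OF p]
  have key: "\<phi> (bul (T a) b) = sw cm (\<lambda>a1 a2. \<phi> (mul (T a2) (beta a1 b))) a" for a b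
  proof -
    have "\<phi> (bul (T a) b) = sw cm (\<lambda>c d. \<phi> (mul c (act d b))) (T a)"
      by (simp add: pbul_def P)
    also have "\<dots> = sw cm (\<lambda>a1 a2. \<phi> (mul (T a2) (act (T a1) b))) a"
      by (rule cm_T) (simp add: lin_rules P)
    finally show ?thesis by (simp add: act_T)
  qed
  have "\<phi> (sw cm (\<lambda>a b. bul (T a) b) x) = sw_iter cm 0 (\<lambda>l. sw cm (\<lambda>a b. sw cm (\<lambda>a1 a2. \<phi> (mul (T a2) (beta a1 b))) a) (l 0)) x"
    by (simp add: sw_iter_0 P key)
  also have "\<dots> = sw_iter cm 2 (\<lambda>l. \<phi> (sw cm (\<lambda>c d. mul (beta d (S (l 1))) (beta c (l 2))) (l 0))) x"
    by (simp add: sweedler_nf P pS_def)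
  also have "\<dots> = sw_iter cm 2 (\<lambda>l. \<phi> (beta (l 0) (mul (S (l 1)) (l 2)))) x"
    by (simp add: beta_mul)
  also have "\<dots> = sw_iter cm 1 (\<lambda>l. sw cm (\<lambda>c d. \<phi> (beta (l 0) (mul (S c) d))) (l 1)) x"
    by (simp add: sweedler_nf P)
  also have "\<dots> = sw_iter cm 1 (\<lambda>l. \<phi> (beta (l 0) (sc (eps (l 1)) one))) x"
    by (intro sw_iter_cong S_mul_conv_ctx) (simp add: sweedler_nf P)
  also have "\<dots> = sw_iter cm 0 (\<lambda>l. sw cm (\<lambda>c d. \<phi> (sc (eps ((l(0 := sc (eps c) d)) 0)) one)) (l 0)) x"
    by (simp add: sweedler_nf P beta_one)
  also have "\<dots> = \<phi> (sc (eps x) one)"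
    using sw_iter_counit(1)[of 0 "\<lambda>l. \<phi> (sc (eps (l 0)) one)" 0 x] by (simp add: sweedler_nf P sw_iter_0)
  finally show "\<phi> (sw cm (\<lambda>a b. bul (T a) b) x) = \<phi> (sc (eps x) one)" .
qed

lemma S_one: "S one = one"
  using mul_S_conv[of one] by (simp add: cm_one_h lin_rules scale_one)

lemma T_one: "T one = one"
  by (simp add: pS_def cm_one_h lin_rules S_one beta_one scale_one)

lemma lin_h_bul1: "lin_h E \<Longrightarrow> lin_h (\<lambda>v. bul (E v) c)"
  and lin_h_bul2: "lin_h E \<Longrightarrow> lin_h (\<lambda>v. bul c (E v))"
  and lin_h_T_comp: "lin_h E \<Longrightarrow> lin_h (\<lambda>v. T (E v))"
  by (auto intro: bilin_lin_h1 bilin_lin_h2 bul_bilin lin_h_comp lin_h_T)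

lemma bul_sw1: "bul (sw cm G z) c = sw cm (\<lambda>a b. bul (G a b) c) z"
  and bul_sw2: "bul c (sw cm G z) = sw cm (\<lambda>a b. bul c (G a b)) z"
  and T_sw: "T (sw cm G z) = sw cm (\<lambda>a b. T (G a b)) z"
  by (rule lin_h_apply_sw; simp add: lin_rules lin_h_bul1 lin_h_bul2 lin_h_T)+

lemma bul_scale1: "bul (sc r a) b = sc r (bul a b)"
  and bul_scale2: "bul a (sc r b) = sc r (bul a b)"
  and T_scale: "T (sc r a) = sc r (T a)"
  using bilin_scale_left[OF bul_bilin] bilin_scale_right[OF bul_bilin] lin_h_T
  by (simp_all add: lin_h_iff)

lemma T_bul_conv_ctx: "lin_k \<Psi> \<Longrightarrow> sw cm (\<lambda>c d. \<Psi> (bul (T c) d)) z = \<Psi> (sc (eps z) one)"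
  and bul_T_conv_ctx: "lin_k \<Psi> \<Longrightarrow> sw cm (\<lambda>c d. \<Psi> (bul c (T d))) z = \<Psi> (sc (eps z) one)"
  by (metis (no_types) lin_k_apply_sw T_bul_conv bul_T_conv)+

lemmas sweedler_nf_bul = sweedler_nf lin_h_bul1 lin_h_bul2 lin_h_T_comp bul_sw1 bul_sw2 T_sw
  bul_scale1 bul_scale2 T_scale bul_assoc bul_one_left bul_one_right T_one eps_bul eps_T cm_bul cm_act cm_T

lemma T_antimult: "T (bul x y) = bul (T y) (T x)"
proof (rule functional_ext)
  fix \<phi> assume p: "lin_k \<phi>"
  note P = lin_k_facts[OF p]
  have "\<phi> (bul (T y) (T x)) = sw_iter cm 0 (\<lambda>l. sw_iter cm 0 (\<lambda>k. \<phi> (bul (T (k 0)) (T (l 0)))) y) x"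
    by (simp add: sw_iter_0)
  also have "\<dots> = sw_iter cm 0 (\<lambda>l. sw cm (\<lambda>c d. sw_iter cm 0 (\<lambda>k. \<phi> (bul (T (k 0)) (T ((l(0 := sc (eps d) c)) 0)))) y) (l 0)) x"
    using sw_iter_counit(2)[of 0 "\<lambda>l. sw_iter cm 0 (\<lambda>k. \<phi> (bul (T (k 0)) (T (l 0)))) y" 0 x] by (simp add: sweedler_nf_bul P)
  also have "\<dots> = sw_iter cm 1 (\<lambda>l. sw_iter cm 0 (\<lambda>k. \<phi> (bul (T (k 0)) (T (l 0))) * eps (l 1)) y) x"
    by (simp add: sweedler_nf_bul P mult_ac)
  also have "\<dots> = sw_iter cm 1 (\<lambda>l. sw_iter cm 0 (\<lambda>k. sw cm (\<lambda>c d. \<phi> (bul (T ((k(0 := sc (eps d) c)) 0)) (T (l 0))) * eps (l 1)) (k 0)) y) x"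
    by (rule sw_iter_cong, rule sw_iter_counit(2)[symmetric]) (simp_all add: sweedler_nf_bul P)
  also have "\<dots> = sw_iter cm 1 (\<lambda>l. sw_iter cm 1 (\<lambda>k. \<phi> (bul (bul (T (k 0)) (T (l 0))) (sc (eps (bul (l 1) (k 1))) one))) y) x"
    by (simp add: sweedler_nf_bul P mult_ac)
  also have "\<dots> = sw_iter cm 1 (\<lambda>l. sw_iter cm 1 (\<lambda>k. \<phi> (bul (bul (T (k 0)) (T (l 0))) (sw cm (\<lambda>a b. bul a (T b)) (bul (l 1) (k 1))))) y) x"
    by (simp add: bul_T_conv)
  also have "\<dots> = sw_iter cm 1 (\<lambda>l. sw_iter cm 2 (\<lambda>k. sw cm (\<lambda>c d. \<phi> (bul (T (k 0)) (bul (bul (T c) d) (bul (k 1) (T (bul (l 1) (k 2))))))) (l 0)) y) x"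
    by (simp add: sweedler_nf_bul P)
  also have "\<dots> = sw_iter cm 1 (\<lambda>l. sw_iter cm 2 (\<lambda>k. \<phi> (bul (T (k 0)) (bul (sc (eps (l 0)) one) (bul (k 1) (T (bul (l 1) (k 2))))))) y) x"
    by (intro sw_iter_cong T_bul_conv_ctx) (simp add: sweedler_nf_bul P)
  also have "\<dots> = sw_iter cm 1 (\<lambda>l. sw_iter cm 1 (\<lambda>k. sw cm (\<lambda>c d. \<phi> (bul (bul (T c) d) (T (bul (l 1) (k 1)))) * eps (l 0)) (k 0)) y) x"
    by (simp add: sweedler_nf_bul P)
  also have "\<dots> = sw_iter cm 1 (\<lambda>l. sw_iter cm 1 (\<lambda>k. \<phi> (bul (sc (eps (k 0)) one) (T (bul (l 1) (k 1)))) * eps (l 0)) y) x"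
    by (intro sw_iter_cong T_bul_conv_ctx) (simp add: sweedler_nf_bul P)
  also have "\<dots> = sw_iter cm 1 (\<lambda>l. sw_iter cm 0 (\<lambda>k. sw cm (\<lambda>c d. \<phi> (T (bul (l 1) ((k(0 := sc (eps c) d)) 0))) * eps (l 0)) (k 0)) y) x"
    by (simp add: sweedler_nf_bul P)
  also have "\<dots> = sw_iter cm 1 (\<lambda>l. sw_iter cm 0 (\<lambda>k. \<phi> (T (bul (l 1) (k 0))) * eps (l 0)) y) x"
    by (rule sw_iter_cong, rule sw_iter_counit(1)) (simp_all add: sweedler_nf_bul P)
  also have "\<dots> = sw_iter cm 0 (\<lambda>l. sw cm (\<lambda>c d. sw_iter cm 0 (\<lambda>k. \<phi> (T (bul ((l(0 := sc (eps c) d)) 0) (k 0)))) y) (l 0)) x"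
    by (simp add: sweedler_nf_bul P)
  also have "\<dots> = sw_iter cm 0 (\<lambda>l. sw_iter cm 0 (\<lambda>k. \<phi> (T (bul (l 0) (k 0)))) y) x"
    by (rule sw_iter_counit(1)) (simp_all add: sweedler_nf_bul P)
  also have "\<dots> = \<phi> (T (bul x y))" by (simp add: sw_iter_0)
  finally show "\<phi> (T (bul x y)) = \<phi> (bul (T y) (T x))" by simp
qed

lemma bul_eq_act_lh: "bul x y = sw cm (\<lambda>x1 x2. sw cm (\<lambda>y1 y2. bul (act x1 y1) (lh x2 y2)) y) x"
proof (rule functional_ext)
  fix \<phi> assume p: "lin_k \<phi>"
  note P = lin_k_facts[OF p]
  have "\<phi> (sw cm (\<lambda>x1 x2. sw cm (\<lambda>y1 y2. bul (act x1 y1) (lh x2 y2)) y) x)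
     = sw_iter cm 0 (\<lambda>l. sw_iter cm 0 (\<lambda>k. \<phi> (sw cm (\<lambda>x1 x2. sw cm (\<lambda>y1 y2. bul (act x1 y1) (lh x2 y2)) (k 0)) (l 0))) y) x"
    by (simp add: sw_iter_0)
  also have "\<dots> = sw_iter cm 1 (\<lambda>l. sw_iter cm 1 (\<lambda>k. sw cm (\<lambda>c d. \<phi> (bul (bul c (T d)) (bul (l 1) (k 1)))) (act (l 0) (k 0))) y) x"
    by (simp add: sweedler_nf_bul P plh_def)
  also have "\<dots> = sw_iter cm 1 (\<lambda>l. sw_iter cm 1 (\<lambda>k. \<phi> (bul (sc (eps (act (l 0) (k 0))) one) (bul (l 1) (k 1)))) y) x"
    by (intro sw_iter_cong bul_T_conv_ctx) (simp add: sweedler_nf_bul P)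
  also have "\<dots> = sw_iter cm 1 (\<lambda>l. sw_iter cm 0 (\<lambda>k. sw cm (\<lambda>c d. \<phi> (bul (l 1) ((k(0 := sc (eps c) d)) 0)) * eps (l 0)) (k 0)) y) x"
    by (simp add: sweedler_nf_bul P)
  also have "\<dots> = sw_iter cm 1 (\<lambda>l. sw_iter cm 0 (\<lambda>k. \<phi> (bul (l 1) (k 0)) * eps (l 0)) y) x"
    by (rule sw_iter_cong, rule sw_iter_counit(1)) (simp_all add: sweedler_nf_bul P)
  also have "\<dots> = sw_iter cm 0 (\<lambda>l. sw cm (\<lambda>c d. sw_iter cm 0 (\<lambda>k. \<phi> (bul ((l(0 := sc (eps c) d)) 0) (k 0))) y) (l 0)) x"
    by (simp add: sweedler_nf_bul P)
  also have "\<dots> = sw_iter cm 0 (\<lambda>l. sw_iter cm 0 (\<lambda>k. \<phi> (bul (l 0) (k 0))) y) x"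
    by (rule sw_iter_counit(1)) (simp_all add: sweedler_nf_bul P)
  also have "\<dots> = \<phi> (bul x y)" by (simp add: sw_iter_0)
  finally show "\<phi> (bul x y) = \<phi> (sw cm (\<lambda>x1 x2. sw cm (\<lambda>y1 y2. bul (act x1 y1) (lh x2 y2)) y) x)" by simp
qed

lemma bcoact_act_lh:
  assumes f: "bilin sc (*) f"
  shows "bcoact bul cm T f (act a v) = sw3 cm (\<lambda>a1 a2 a3. sw3 cm (\<lambda>v1 v2 v3.
      sw cm (\<lambda>c d. sw cm (\<lambda>c' d'. f (bul (act a1 v1) (bul (lh d d') (bul (T v3) (T a3)))) (act c c')) v2) a2) v) a"
proof -
  note F = bilin_k_facts[OF f]
  have "bcoact bul cm T f (act a v) = sw_iter cm 0 (\<lambda>l. sw_iter cm 0 (\<lambda>k. bcoact bul cm T f (act (l 0) (k 0))) v) a"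
    by (simp add: sw_iter_0)
  also have "\<dots> = sw_iter cm 2 (\<lambda>l. sw_iter cm 2 (\<lambda>k. f (bul (act (l 0) (k 0)) (T (act (l 2) (k 2)))) (act (l 1) (k 1))) v) a"
    by (simp add: sweedler_nf_bul F bcoact_def sw3_def)
  also have "\<dots> = sw_iter cm 3 (\<lambda>l. sw_iter cm 2 (\<lambda>k. f (bul (act (l 0) (k 0)) (bul (T (act (l 2) (k 2))) (sc (eps (l 3)) one))) (act (l 1) (k 1))) v) a"
    using sw_iter_counit_merge(1)[where n=2 and F="\<lambda>l. sw_iter cm 2 (\<lambda>k. f (bul (act (l 0) (k 0)) (T (act (l 2) (k 2)))) (act (l 1) (k 1))) v" and i=2 and x=a]
    by (simp add: sweedler_nf_bul F)
  also have "\<dots> = sw_iter cm 3 (\<lambda>l. sw cm (\<lambda>c d. sw_iter cm 2 (\<lambda>k. f (bul (act (l 0) (k 0)) (bul (T (act (l 2) (k 2))) (bul c (T d)))) (act (l 1) (k 1))) v) (l 3)) a"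
    by (intro sw_iter_cong bul_T_conv_ctx[symmetric]) (simp add: sweedler_nf_bul F)
  also have "\<dots> = sw_iter cm 4 (\<lambda>l. sw_iter cm 3 (\<lambda>k. f (bul (act (l 0) (k 0)) (bul (T (act (l 2) (k 2))) (bul (l 3) (bul (sc (eps (k 3)) one) (T (l 4)))))) (act (l 1) (k 1))) v) a"
    using sw_iter_counit_merge_inner[where G="\<lambda>l k. f (bul (act (l 0) (k 0)) (bul (T (act (l 2) (k 2))) (bul (l 3) (T (l 4))))) (act (l 1) (k 1))"
        and m=2 and i=2 and n=4 and y=v and x=a]
    by (simp add: sweedler_nf_bul F)
  also have "\<dots> = sw_iter cm 4 (\<lambda>l. sw_iter cm 3 (\<lambda>k. sw cm (\<lambda>c d. f (bul (act (l 0) (k 0)) (bul (T (act (l 2) (k 2))) (bul (l 3) (bul (bul c (T d)) (T (l 4)))))) (act (l 1) (k 1))) (k 3)) v) a"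
    by (intro sw_iter_cong bul_T_conv_ctx[symmetric]) (simp add: sweedler_nf_bul F)
  also have "\<dots> = sw3 cm (\<lambda>a1 a2 a3. sw3 cm (\<lambda>v1 v2 v3.
      sw cm (\<lambda>c d. sw cm (\<lambda>c' d'. f (bul (act a1 v1) (bul (lh d d') (bul (T v3) (T a3)))) (act c c')) v2) a2) v) a"
  proof -
    have "sw_iter cm 0 (\<lambda>l. sw_iter cm 0 (\<lambda>k. sw3 cm (\<lambda>a1 a2 a3. sw3 cm (\<lambda>v1 v2 v3.
      sw cm (\<lambda>c d. sw cm (\<lambda>c' d'. f (bul (act a1 v1) (bul (lh d d') (bul (T v3) (T a3)))) (act c c')) v2) a2) (k 0)) (l 0)) v) a
      = sw_iter cm 4 (\<lambda>l. sw_iter cm 3 (\<lambda>k. sw cm (\<lambda>c d. f (bul (act (l 0) (k 0)) (bul (T (act (l 2) (k 2))) (bul (l 3) (bul (bul c (T d)) (T (l 4)))))) (act (l 1) (k 1))) (k 3)) v) a"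
      by (simp add: sweedler_nf_bul F sw3_def plh_def)
    then show ?thesis by (simp add: sw_iter_0)
  qed
  finally show ?thesis .
qed

lemma bcoact_act:
  assumes f: "bilin sc (*) f"
  shows "bcoact bul cm T f (act a v)
       = sw3 cm (\<lambda>a1 a2 a3. bcoact bul cm T (\<lambda>h u. f (bul (bul a1 h) (T a3)) (act a2 u)) v) a"
proof -
  note F = bilin_k_facts[OF f]
  have swap: "sw cm (\<lambda>c d. sw cm (\<lambda>c' d'. f (bul w (bul (lh d d') w')) (act c c')) v2) a2
    = sw cm (\<lambda>c d. sw cm (\<lambda>c' d'. f (bul w (bul (lh c c') w')) (act d d')) v2) a2" for w w' a2 v2
    using act_lh_swap[of "\<lambda>p q. f (bul w (bul q w')) p" v2 a2]
    by (simp add: lin_rules F lin_h_bul1 lin_h_bul2)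
  have "bcoact bul cm T f (act a v) = sw3 cm (\<lambda>a1 a2 a3. sw3 cm (\<lambda>v1 v2 v3.
      sw cm (\<lambda>c d. sw cm (\<lambda>c' d'. f (bul (act a1 v1) (bul (lh c c') (bul (T v3) (T a3)))) (act d d')) v2) a2) v) a"
    by (simp only: bcoact_act_lh[OF f] swap)
  also have "\<dots> = sw3 cm (\<lambda>a1 a2 a3. sw3 cm (\<lambda>v1 v2 v3. f (bul (sw cm (\<lambda>x1 x2. sw cm (\<lambda>y1 y2.
      bul (act x1 y1) (lh x2 y2)) v1) a1) (bul (T v3) (T a3))) (act a2 v2)) v) a"
  proof -
    have "sw_iter cm 0 (\<lambda>l. sw_iter cm 0 (\<lambda>k. sw3 cm (\<lambda>a1 a2 a3. sw3 cm (\<lambda>v1 v2 v3.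
      sw cm (\<lambda>c d. sw cm (\<lambda>c' d'. f (bul (act a1 v1) (bul (lh c c') (bul (T v3) (T a3)))) (act d d')) v2) a2) (k 0)) (l 0)) v) a
      = sw_iter cm 0 (\<lambda>l. sw_iter cm 0 (\<lambda>k. sw3 cm (\<lambda>a1 a2 a3. sw3 cm (\<lambda>v1 v2 v3. f (bul (sw cm (\<lambda>x1 x2. sw cm (\<lambda>y1 y2.
      bul (act x1 y1) (lh x2 y2)) v1) a1) (bul (T v3) (T a3))) (act a2 v2)) (k 0)) (l 0)) v) a"
      by (simp add: sweedler_nf_bul F sw3_def plh_def)
    then show ?thesis by (simp add: sw_iter_0)
  qed
  also have "\<dots> = sw3 cm (\<lambda>a1 a2 a3. bcoact bul cm T (\<lambda>h u. f (bul (bul a1 h) (T a3)) (act a2 u)) v) a"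
  proof -
    have "sw_iter cm 0 (\<lambda>l. sw_iter cm 0 (\<lambda>k. sw3 cm (\<lambda>a1 a2 a3. sw3 cm (\<lambda>v1 v2 v3.
      f (bul (bul a1 v1) (bul (T v3) (T a3))) (act a2 v2)) (k 0)) (l 0)) v) a
      = sw_iter cm 0 (\<lambda>l. sw_iter cm 0 (\<lambda>k. sw3 cm (\<lambda>a1 a2 a3.
      bcoact bul cm T (\<lambda>h u. f (bul (bul a1 h) (T a3)) (act a2 u)) (k 0)) (l 0)) v) a"
      by (simp add: sweedler_nf_bul F bcoact_def sw3_def)
    then show ?thesis by (simp add: sw_iter_0 bul_eq_act_lh[symmetric])
  qed
  finally show ?thesis .
qed

lemmas sweedler_nf_bul_T = sweedler_nf_bul T_antimult

lemma bcoact_coassoc: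
  assumes f: "trilin sc (*) f"
  shows "bcoact bul cm T (\<lambda>h u. sw cm (\<lambda>h1 h2. f h1 h2 u) h) v
       = bcoact bul cm T (\<lambda>h u. bcoact bul cm T (\<lambda>h' u'. f h h' u') u) v"
proof -
  note F = trilin_k_facts[OF f]
  have "sw_iter cm 0 (\<lambda>l. bcoact bul cm T (\<lambda>h u. sw cm (\<lambda>h1 h2. f h1 h2 u) h) (l 0)) v
      = sw_iter cm 0 (\<lambda>l. bcoact bul cm T (\<lambda>h u. bcoact bul cm T (\<lambda>h' u'. f h h' u') u) (l 0)) v"
    by (simp add: sweedler_nf_bul_T F bcoact_def sw3_def)
  then show ?thesis by (simp add: sw_iter_0)
qed

lemma bcoact_counit: "bcoact bul cm T (\<lambda>h u. sc (eps h) u) v = v"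
proof (rule functional_ext)
  fix \<phi> assume p: "lin_k \<phi>"
  note P = lin_k_facts[OF p]
  have "\<phi> (bcoact bul cm T (\<lambda>h u. sc (eps h) u) v) = sw_iter cm 0 (\<lambda>l. \<phi> (bcoact bul cm T (\<lambda>h u. sc (eps h) u) (l 0))) v"
    by (simp add: sw_iter_0)
  also have "\<dots> = sw_iter cm 2 (\<lambda>m. eps (m 0) * eps (m 2) * \<phi> (m 1)) v"
    by (simp add: sweedler_nf_bul_T P bcoact_def sw3_def)
  also have "\<dots> = sw_iter cm 1 (\<lambda>m. eps (m 0) * \<phi> (m 1)) v"
    using sw_iter_counit_merge(1)[where n=1 and F="\<lambda>m. eps (m 0) * \<phi> (m 1)" and i=1 and x=v]
    by (simp add: sweedler_nf_bul_T P)
  also have "\<dots> = sw_iter cm 0 (\<lambda>m. \<phi> (m 0)) v"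
    using sw_iter_counit_merge(2)[where n=0 and F="\<lambda>m. \<phi> (m 0)" and i=0 and x=v]
    by (simp add: sweedler_nf_bul_T P)
  also have "\<dots> = \<phi> v" by (simp add: sw_iter_0)
  finally show "\<phi> (bcoact bul cm T (\<lambda>h u. sc (eps h) u) v) = \<phi> v" .
qed

lemma bcoact_one:
  assumes f: "bilin sc (*) f"
  shows "bcoact bul cm T f one = f one one"
  by (simp add: bcoact_def sw3_def cm_one lin_rules lin_k_sw bilin_k_facts[OF f] lin_h_bul1 lin_h_bul2 lin_h_T_comp T_one bul_one_left)

lemma bcoact_eps: "bcoact bul cm T (\<lambda>h w. sc (eps w) h) v = sc (eps v) one"
proof (rule functional_ext)
  fix \<phi> assume p: "lin_k \<phi>"
  note P = lin_k_facts[OF p]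
  have "\<phi> (bcoact bul cm T (\<lambda>h w. sc (eps w) h) v) = sw_iter cm 0 (\<lambda>l. \<phi> (bcoact bul cm T (\<lambda>h w. sc (eps w) h) (l 0))) v"
    by (simp add: sw_iter_0)
  also have "\<dots> = sw_iter cm 2 (\<lambda>m. eps (m 1) * \<phi> (bul (m 0) (T (m 2)))) v"
    by (simp add: sweedler_nf_bul_T P bcoact_def sw3_def)
  also have "\<dots> = sw_iter cm 1 (\<lambda>m. \<phi> (bul (m 0) (T (m 1)))) v"
    using sw_iter_counit_merge(1)[where n=1 and F="\<lambda>m. \<phi> (bul (m 0) (T (m 1)))" and i=0 and x=v]
    by (simp add: sweedler_nf_bul_T P)
  also have "\<dots> = sw_iter cm 0 (\<lambda>l. sw cm (\<lambda>c d. \<phi> (bul c (T d))) (l 0)) v"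
    by (simp add: sweedler_nf_bul_T P)
  also have "\<dots> = \<phi> (sc (eps v) one)"
    by (simp add: sw_iter_0 bul_T_conv_ctx P lin_rules lin_h_bul1 lin_h_bul2 lin_h_T_comp)
  finally show "\<phi> (bcoact bul cm T (\<lambda>h w. sc (eps w) h) v) = \<phi> (sc (eps v) one)" .
qed

lemma bcoact_cm:
  assumes f: "trilin sc (*) f"
  shows "bcoact bul cm T (\<lambda>h w. sw cm (\<lambda>w1 w2. f h w1 w2) w) v
       = sw cm (\<lambda>v1 v2. bcoact bul cm T (\<lambda>h u. bcoact bul cm T (\<lambda>h' u'. f (bul h h') u u') v2) v1) v"
proof -
  note F = trilin_k_facts[OF f]
  have "bcoact bul cm T (\<lambda>h w. sw cm (\<lambda>w1 w2. f h w1 w2) w) v = sw_iter cm 0 (\<lambda>l. bcoact bul cm T (\<lambda>h w. sw cm (\<lambda>w1 w2. f h w1 w2) w) (l 0)) v"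
    by (simp add: sw_iter_0)
  also have "\<dots> = sw_iter cm 3 (\<lambda>m. f (bul (m 0) (T (m 3))) (m 1) (m 2)) v"
    by (simp add: sweedler_nf_bul_T F bcoact_def sw3_def)
  also have "\<dots> = sw_iter cm 4 (\<lambda>m. f (bul (m 0) (bul (sc (eps (m 2)) one) (T (m 4)))) (m 1) (m 3)) v"
    using sw_iter_counit_merge(1)[where n=3 and F="\<lambda>m. f (bul (m 0) (T (m 3))) (m 1) (m 2)" and i=1 and x=v]
    by (simp add: sweedler_nf_bul_T F)
  also have "\<dots> = sw_iter cm 4 (\<lambda>m. sw cm (\<lambda>c d. f (bul (m 0) (bul (bul (T c) d) (T (m 4)))) (m 1) (m 3)) (m 2)) v"
    by (intro sw_iter_cong T_bul_conv_ctx[symmetric]) (simp add: sweedler_nf_bul_T F)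
  also have "\<dots> = sw cm (\<lambda>v1 v2. bcoact bul cm T (\<lambda>h u. bcoact bul cm T (\<lambda>h' u'. f (bul h h') u u') v2) v1) v"
  proof -
    have "sw_iter cm 0 (\<lambda>l. sw cm (\<lambda>v1 v2. bcoact bul cm T (\<lambda>h u. bcoact bul cm T (\<lambda>h' u'. f (bul h h') u u') v2) v1) (l 0)) v
       = sw_iter cm 4 (\<lambda>m. sw cm (\<lambda>c d. f (bul (m 0) (bul (bul (T c) d) (T (m 4)))) (m 1) (m 3)) (m 2)) v"
      by (simp add: sweedler_nf_bul_T F bcoact_def sw3_def)
    then show ?thesis by (simp add: sw_iter_0)
  qed
  finally show ?thesis .
qed

lemma lin_k_bcoact:
  assumes f: "bilin sc (*) f"
  shows "lin_k (\<lambda>v. bcoact bul cm T f v)"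
  by (simp add: bcoact_def sw3_def lin_rules lin_k_sw bilin_k_facts[OF f] lin_h_bul1 lin_h_bul2 lin_h_T_comp)

lemma act_bul: "act (bul x y) z = act x (act y z)"
  by (simp add: act_act pbul_def)

text \<open>This is (P5) once \<open>\<beta>(x)\<close> is written as \<open>S\<^sub>\<rightharpoonup>(x) \<rightharpoonup> -\<close> and \<open>x \<rightharpoonup> (y \<rightharpoonup> z) = (x \<bullet> y) \<rightharpoonup> z\<close>
  is used to combine the actions.\<close>

lemma cm_mul_braided:
  assumes f: "bilin sc (*) f"
  shows "sw cm f (mul b c) = sw cm (\<lambda>b1 b2. sw cm (\<lambda>c1 c2.
               bcoact bul cm T (\<lambda>h u. f (mul b1 (act h c1)) (mul u c2)) b2) c) b"
proof -
  note F = bilin_k_facts[OF f]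
  have "sw_iter cm 0 (\<lambda>l. sw_iter cm 0 (\<lambda>k. sw cm f (mul (l 0) (k 0))) c) b
      = sw_iter cm 0 (\<lambda>l. sw_iter cm 0 (\<lambda>k. sw cm (\<lambda>b1 b2. sw cm (\<lambda>c1 c2.
               bcoact bul cm T (\<lambda>h u. f (mul b1 (act h c1)) (mul u c2)) b2) (k 0)) (l 0)) c) b"
    by (simp add: sweedler_nf F cm_mul[OF f] act_bul act_T sw4_def sw3_def bcoact_def lin_h_bul1 lin_h_bul2 lin_h_T_comp bul_sw1 bul_sw2 T_sw)
  then show ?thesis by (simp add: sw_iter_0)
qed

lemma bul_mul: "bul a (mul b c) = sw3 cm (\<lambda>a1 a2 a3. mul (mul (bul a1 b) (S a2)) (bul a3 c)) a"
proof (rule functional_ext)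
  fix \<phi> assume p: "lin_k \<phi>"
  note P = lin_k_facts[OF p]
  have "\<phi> (sw3 cm (\<lambda>a1 a2 a3. mul (mul (bul a1 b) (S a2)) (bul a3 c)) a)
      = sw_iter cm 0 (\<lambda>l. \<phi> (sw3 cm (\<lambda>a1 a2 a3. mul (mul (bul a1 b) (S a2)) (bul a3 c)) (l 0))) a"
    by (simp add: sw_iter_0)
  also have "\<dots> = sw_iter cm 3 (\<lambda>l. sw cm (\<lambda>c' d. \<phi> (mul (l 0) (mul (act (l 1) b) (mul (mul (S c') d) (act (l 3) c))))) (l 2)) a"
    by (simp add: sweedler_nf P pbul_def sw3_def)
  also have "\<dots> = sw_iter cm 3 (\<lambda>l. \<phi> (mul (l 0) (mul (act (l 1) b) (mul (sc (eps (l 2)) one) (act (l 3) c))))) a"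
    by (intro sw_iter_cong S_mul_conv_ctx) (simp add: sweedler_nf P)
  also have "\<dots> = sw_iter cm 2 (\<lambda>l. \<phi> (mul (l 0) (mul (act (l 1) b) (act (l 2) c)))) a"
    using sw_iter_counit_merge(1)[where n=2 and F="\<lambda>l. \<phi> (mul (l 0) (mul (act (l 1) b) (act (l 2) c)))" and i=1 and x=a]
    by (simp add: sweedler_nf P)
  also have "\<dots> = sw_iter cm 0 (\<lambda>l. \<phi> (bul (l 0) (mul b c))) a"
    by (simp add: sweedler_nf P pbul_def act_mul)
  also have "\<dots> = \<phi> (bul a (mul b c))" by (simp add: sw_iter_0)
  finally show "\<phi> (bul a (mul b c)) = \<phi> (sw3 cm (\<lambda>a1 a2 a3. mul (mul (bul a1 b) (S a2)) (bul a3 c)) a)" by simp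
qed

lemma act_act_T_conv_ctx: "lin_k \<Psi> \<Longrightarrow> sw cm (\<lambda>c d. \<Psi> (act c (act (T d) y))) z = \<Psi> (sc (eps z) y)"
  by (metis (no_types) lin_k_apply_sw act_act_T_conv)

lemma mul_eq_bul_act_T: "mul x y = sw cm (\<lambda>x1 x2. bul x1 (act (T x2) y)) x"
proof (rule functional_ext)
  fix \<phi> assume p: "lin_k \<phi>"
  note P = lin_k_facts[OF p]
  have "\<phi> (sw cm (\<lambda>x1 x2. bul x1 (act (T x2) y)) x) = sw_iter cm 0 (\<lambda>l. \<phi> (sw cm (\<lambda>x1 x2. bul x1 (act (T x2) y)) (l 0))) x"
    by (simp add: sw_iter_0)
  also have "\<dots> = sw_iter cm 1 (\<lambda>l. sw cm (\<lambda>c d. \<phi> (mul (l 0) (act c (act (T d) y)))) (l 1)) x"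
    by (simp add: sweedler_nf P pbul_def lin_h_T_comp)
  also have "\<dots> = sw_iter cm 1 (\<lambda>l. \<phi> (mul (l 0) (sc (eps (l 1)) y))) x"
    by (intro sw_iter_cong act_act_T_conv_ctx) (simp add: sweedler_nf P lin_h_T_comp)
  also have "\<dots> = sw_iter cm 0 (\<lambda>l. \<phi> (mul (l 0) y)) x"
    using sw_iter_counit_merge(1)[where n=0 and F="\<lambda>l. \<phi> (mul (l 0) y)" and i=0 and x=x]
    by (simp add: sweedler_nf P lin_h_T_comp)
  also have "\<dots> = \<phi> (mul x y)" by (simp add: sw_iter_0)
  finally show "\<phi> (mul x y) = \<phi> (sw cm (\<lambda>x1 x2. bul x1 (act (T x2) y)) x)" by simp
qed

lemma bcoact_mul:
  assumes f: "bilin sc (*) f"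
  shows "bcoact bul cm T f (mul b c) = bcoact bul cm T (\<lambda>h u. bcoact bul cm T (\<lambda>h' u'. f (bul h h') (mul u u')) c) b"
proof -
  note F = bilin_k_facts[OF f]
  have "bcoact bul cm T f (mul b c) = sw_iter cm 0 (\<lambda>l. sw_iter cm 0 (\<lambda>k. bcoact bul cm T f (mul (l 0) (k 0))) c) b"
    by (simp add: sw_iter_0)
  also have "\<dots> = sw_iter cm 3 (\<lambda>l. sw_iter cm 0 (\<lambda>k. bcoact bul cm T (\<lambda>h u. f (bul (l 0) (bul h (T (l 2)))) (bul (l 1) u)) (act (T (l 3)) (k 0))) c) b"
    by (simp add: sweedler_nf_bul_T F mul_eq_bul_act_T bcoact_def sw3_def)
  also have "\<dots> = sw_iter cm 3 (\<lambda>l. sw_iter cm 0 (\<lambda>k. sw3 cm (\<lambda>a0 a1 a2. bcoact bul cm T (\<lambda>h u. f (bul (l 0) (bul (bul (bul a0 h) (T a2)) (T (l 2)))) (bul (l 1) (act a1 u))) (k 0)) (T (l 3))) c) b"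
    by (intro sw_iter_cong bcoact_act) (simp add: lin_rules F lin_h_bul1 lin_h_bul2 lin_h_T_comp)
  also have "\<dots> = sw_iter cm 4 (\<lambda>l. sw_iter cm 2 (\<lambda>k. sw cm (\<lambda>c d. f (bul (l 0) (bul (T (l 4)) (bul (k 0) (bul (T (k 2)) (bul (T c) d))))) (bul (l 1) (act (T (l 3)) (k 1)))) (T (l 2))) c) b"
    by (simp add: sweedler_nf_bul_T F bcoact_def sw3_def)
  also have "\<dots> = sw_iter cm 4 (\<lambda>l. sw_iter cm 2 (\<lambda>k. f (bul (l 0) (bul (T (l 4)) (bul (k 0) (bul (T (k 2)) (sc (eps (T (l 2))) one))))) (bul (l 1) (act (T (l 3)) (k 1)))) c) b"
    by (intro sw_iter_cong T_bul_conv_ctx) (simp add: lin_rules F lin_h_bul1 lin_h_bul2 lin_h_T_comp)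
  also have "\<dots> = sw_iter cm 3 (\<lambda>l. sw_iter cm 2 (\<lambda>k. f (bul (l 0) (bul (T (l 3)) (bul (k 0) (T (k 2))))) (bul (l 1) (act (T (l 2)) (k 1)))) c) b"
    using sw_iter_counit_merge(1)[where n=3 and F="\<lambda>l. sw_iter cm 2 (\<lambda>k. f (bul (l 0) (bul (T (l 3)) (bul (k 0) (T (k 2))))) (bul (l 1) (act (T (l 2)) (k 1)))) c" and i=1 and x=b]
    by (simp add: sweedler_nf_bul_T F)
  also have "\<dots> = bcoact bul cm T (\<lambda>h u. bcoact bul cm T (\<lambda>h' u'. f (bul h h') (mul u u')) c) b"
  proof -
    have "sw_iter cm 0 (\<lambda>l. sw_iter cm 0 (\<lambda>k. bcoact bul cm T (\<lambda>h u. bcoact bul cm T (\<lambda>h' u'. f (bul h h') (mul u u')) (k 0)) (l 0)) c) b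
      = sw_iter cm 3 (\<lambda>l. sw_iter cm 2 (\<lambda>k. f (bul (l 0) (bul (T (l 3)) (bul (k 0) (T (k 2))))) (bul (l 1) (act (T (l 2)) (k 1)))) c) b"
      by (simp add: sweedler_nf_bul_T F mul_eq_bul_act_T bcoact_def sw3_def)
    then show ?thesis by (simp add: sw_iter_0)
  qed
  finally show ?thesis .
qed

lemma blh_eq_lh: "blh mul bul cm S T = lh"
  by (intro ext) (simp add: blh_def plh_def bact_eq_act)

lemma alg_bul: "alg sc bul one"
  using vector_space bul_bilin bul_assoc bul_one_left bul_one_right by (simp add: alg_def)

lemma alg_mul: "alg sc mul one"
  using ydph by (simp add: ydph_def)

theorem yd_brace_pbul: "yd_brace sc mul bul one cm eps S T"
  unfolding yd_brace_def Let_def bact_eq_act blh_eq_lh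
  by (intro conjI allI impI)
    (simp_all add: alg_bul coalg alg_mul eps_bul cm_one cm_bul lin_h_T bul_T_conv T_bul_conv
      act_bilin one_act act_bul lin_k_bcoact[unfolded lin_k_iff] bcoact_coassoc bcoact_counit
      bcoact_act act_mul bcoact_mul act_one_right bcoact_one cm_act bcoact_cm eps_act bcoact_eps
      eps_mul cm_mul_braided lin_h_S mul_S_conv S_mul_conv act_lh_swap bul_mul)

end

lemma (in coalgebra) sw_comp_bilin_h:
  assumes g: "Vector_Spaces.linear sc0 sc g"
    and g_cm: "\<And>f x. bilin sc (*) f \<Longrightarrow> sw cm f (g x) = sw cm0 (\<lambda>a b. f (g a) (g b)) x"
    and F: "bilin sc sc F"
  shows "sw cm F (g x) = sw cm0 (\<lambda>a b. F (g a) (g b)) x"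
proof (rule functional_ext)
  fix \<phi> assume p: "lin_k \<phi>"
  have "bilin sc (*) (\<lambda>a b. \<phi> (F a b))"
    using F p unfolding bilin_def lin_h_iff lin_k_iff by auto
  then have "\<phi> (sw cm F (g x)) = sw cm0 (\<lambda>a b. \<phi> (F (g a) (g b))) x"
    by (simp add: lin_k_apply_sw[OF p] g_cm)
  also have "\<dots> = \<phi> (sw cm0 (\<lambda>a b. F (g a) (g b)) x)"
    by (simp add: linear_apply_sw[OF p])
  finally show "\<phi> (sw cm F (g x)) = \<phi> (sw cm0 (\<lambda>a b. F (g a) (g b)) x)" .
qed

lemma ydph_mor_pbul:
  assumes "ydph sc' mul' one' cm' eps' S' act' beta'"
    and g: "ydph_mor sc mul one cm eps act sc' mul' one' cm' eps' act' g"
  shows "g (pbul mul cm act x y) = pbul mul' cm' act' (g x) (g y)"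
proof -
  interpret H': yd_post_hopf sc' mul' one' cm' eps' S' act' beta' by (rule yd_post_hopf.intro) fact
  have lin: "Vector_Spaces.linear sc sc' g" using g by (simp add: ydph_mor_def)
  have "g (pbul mul cm act x y) = sw cm (\<lambda>a b. mul' (g a) (act' (g b) (g y))) x"
    using g by (simp add: pbul_def linear_apply_sw[OF lin] ydph_mor_def)
  also have "\<dots> = pbul mul' cm' act' (g x) (g y)"
    unfolding pbul_def
    by (rule H'.sw_comp_bilin_h[OF lin, symmetric]) (use g in \<open>simp_all add: ydph_mor_def H'.lin_rules\<close>)
  finally show ?thesis .
qed

lemma ydph_mor_brace_mor:
  assumes "ydph sc' mul' one' cm' eps' S' act' beta'"
    and "ydph_mor sc mul one cm eps act sc' mul' one' cm' eps' act' g"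
  shows "brace_mor sc mul (pbul mul cm act) one cm eps sc' mul' (pbul mul' cm' act') one' cm' eps' g"
  using assms ydph_mor_pbul[OF assms] by (simp add: brace_mor_def ydph_mor_def)

theorem corollary3:
  fixes sc :: "'k::field \<Rightarrow> 'h::ab_group_add \<Rightarrow> 'h"
    and mul act beta :: "'h \<Rightarrow> 'h \<Rightarrow> 'h" and one :: 'h
    and cm :: "'h \<Rightarrow> ('h \<times> 'h) list" and eps :: "'h \<Rightarrow> 'k" and S :: "'h \<Rightarrow> 'h"
    and sc' :: "'k \<Rightarrow> 'g::ab_group_add \<Rightarrow> 'g"
    and mul' act' beta' :: "'g \<Rightarrow> 'g \<Rightarrow> 'g" and one' :: 'g
    and cm' :: "'g \<Rightarrow> ('g \<times> 'g) list" and eps' :: "'g \<Rightarrow> 'k" and S' :: "'g \<Rightarrow> 'g"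
    and g :: "'h \<Rightarrow> 'g"
  shows "(ydph sc mul one cm eps S act beta \<longrightarrow>
            yd_brace sc mul (pbul mul cm act) one cm eps S (pS cm S beta))
       \<and> (ydph sc mul one cm eps S act beta \<and> ydph sc' mul' one' cm' eps' S' act' beta'
            \<and> ydph_mor sc mul one cm eps act sc' mul' one' cm' eps' act' g
          \<longrightarrow> brace_mor sc mul (pbul mul cm act) one cm eps
                        sc' mul' (pbul mul' cm' act') one' cm' eps' g)"
  by (auto intro: yd_post_hopf.yd_brace_pbul[OF yd_post_hopf.intro] ydph_mor_brace_mor)
end
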